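(* Consider two pools of two participants. In the first pool, $X_1,X_2$ are independent with $X_i\sim\Gamma(\mu_i,\lambda)$, $S=X_1+X_2\sim\Gamma(\mu,\lambda)$ with $\mu=\mu_1+\mu_2$, and disutilities $v_i(s)=\frac{s^{1+\sigma_i}}{1+\sigma_i}$ with $\sigma_1>0$ and $\sigma_2=2\sigma_1$. In the second pool, $\tilde X_1,\tilde X_2$ are independent with $\tilde X_i\sim\Gamma(\tilde\mu_i,\tilde\lambda)$, $\tilde S=\tilde X_1+\tilde X_2\sim\Gamma(\tilde\mu,\tilde\lambda)$ with $\tilde\mu=\tilde\mu_1+\tilde\mu_2$, and disutilities $\tilde v_i(s)=\frac{s^{1+\tilde\sigma_i}}{1+\tilde\sigma_i}$ with $\tilde\sigma_1>0$ and $\tilde\sigma_2=2\tilde\sigma_1$. Assume $E[X_i]=E[\tilde X_i]$ for $i=1,2$, $\mu\ge\tilde\mu$ and $\mu/\lambda=\tilde\mu/\tilde\lambda$ (so that $S\preceq_{\mathrm{CX}}\tilde S$). Let $(h_1,h_2)$ and $(\tilde h_1,\tilde h_2)$ be the actuarially fair Pareto optimal risk-sharing rules of the two pools. Then $h_i(S)\preceq_{\mathrm{CX}}\tilde h_i(\tilde S)$ for $i=1,2$.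
   Context: $\Gamma(\mu,\lambda)$ denotes the gamma distribution with shape $\mu>0$ and rate $\lambda>0$, density $\frac{\lambda^\mu}{\Gamma(\mu)}s^{\mu-1}e^{-\lambda s}$ on $(0,\infty)$. For random variables $X,Y$, $X\preceq_{\mathrm{CX}}Y$ (convex order) means $E[g(X)]\le E[g(Y)]$ for all convex $g:\mathbb{R}\to\mathbb{R}$ for which the expectations exist. For a pool with aggregate loss $S$ and disutilities $v_1,v_2$, a risk-sharing rule is a pair of functions $h_1,h_2:[0,\infty)\to\mathbb{R}_+$ with $h_1(s)+h_2(s)=s$; it is actuarially fair Pareto optimal (AFPO) if there exist a function $J:[0,\infty)\to\mathbb{R}_+$ and constants $\alpha_1,\alpha_2>0$ with $\alpha_iv_i'(h_i(s))=J(s)$ for all $s\ge0$ and $i=1,2$, and $E[h_i(S)]=E[X_i]$ for $i=1,2$. *)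

theory Defs
  imports "HOL-Probability.Probability"
begin

definition gamma_density :: "real \<Rightarrow> real \<Rightarrow> real \<Rightarrow> real" where
  "gamma_density mu lam s =
     (if s > 0 then lam powr mu / Gamma mu * s powr (mu - 1) * exp (- lam * s) else 0)"

definition gamma_distributed :: "'a measure \<Rightarrow> ('a \<Rightarrow> real) \<Rightarrow> real \<Rightarrow> real \<Rightarrow> bool" where
  "gamma_distributed M X mu lam \<longleftrightarrow>
     distributed M lborel X (\<lambda>s. ennreal (gamma_density mu lam s))"

definition cx_le :: "'a measure \<Rightarrow> ('a \<Rightarrow> real) \<Rightarrow> 'b measure \<Rightarrow> ('b \<Rightarrow> real) \<Rightarrow> bool" where
  "cx_le M X N Y \<longleftrightarrow>
     (\<forall>g :: real \<Rightarrow> real. convex_on UNIV g \<longrightarrow>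
        integrable M (\<lambda>\<omega>. g (X \<omega>)) \<longrightarrow> integrable N (\<lambda>\<omega>. g (Y \<omega>)) \<longrightarrow>
        (\<integral>\<omega>. g (X \<omega>) \<partial>M) \<le> (\<integral>\<omega>. g (Y \<omega>) \<partial>N))"

definition power_disutility :: "real \<Rightarrow> real \<Rightarrow> real" where
  "power_disutility \<sigma> s = s powr (1 + \<sigma>) / (1 + \<sigma>)"

definition power_marginal :: "real \<Rightarrow> real \<Rightarrow> real" where
  "power_marginal \<sigma> s = s powr \<sigma>"

lemma power_marginal_is_derivative:
  assumes "\<sigma> > 0" "s > 0"
  shows "(power_disutility \<sigma> has_real_derivative power_marginal \<sigma> s) (at s)"
proof -
  have "((\<lambda>s. s powr (1 + \<sigma>)) has_real_derivative (1 + \<sigma>) * s powr (1 + \<sigma> - 1)) (at s)"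
    using assms(2) by (rule has_real_derivative_powr)
  then have "((\<lambda>s. s powr (1 + \<sigma>) / (1 + \<sigma>)) has_real_derivative
               (1 + \<sigma>) * s powr (1 + \<sigma> - 1) / (1 + \<sigma>)) (at s)"
    by (rule DERIV_cdivide)
  then show ?thesis using assms
    by (simp add: power_disutility_def [abs_def] power_marginal_def)
qed

definition AFPO ::
  "'a measure \<Rightarrow> ('a \<Rightarrow> real) \<Rightarrow> ('a \<Rightarrow> real) \<Rightarrow> (real \<Rightarrow> real) \<Rightarrow> (real \<Rightarrow> real)
   \<Rightarrow> (real \<Rightarrow> real) \<Rightarrow> (real \<Rightarrow> real) \<Rightarrow> bool" where
  "AFPO M X1 X2 dv1 dv2 h1 h2 \<longleftrightarrow>
     (\<forall>s\<ge>0. h1 s \<ge> 0 \<and> h2 s \<ge> 0 \<and> h1 s + h2 s = s) \<and>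
     (\<exists>(J :: real \<Rightarrow> real) (\<alpha>1 :: real) (\<alpha>2 :: real). \<alpha>1 > 0 \<and> \<alpha>2 > 0 \<and>
        (\<forall>s\<ge>0. J s \<ge> 0 \<and> \<alpha>1 * dv1 (h1 s) = J s \<and> \<alpha>2 * dv2 (h2 s) = J s)) \<and>
     (\<integral>\<omega>. h1 (X1 \<omega> + X2 \<omega>) \<partial>M) = (\<integral>\<omega>. X1 \<omega> \<partial>M) \<and>
     (\<integral>\<omega>. h2 (X1 \<omega> + X2 \<omega>) \<partial>M) = (\<integral>\<omega>. X2 \<omega> \<partial>M)"

end

theory Submission
  imports Defs
begin

text \<open>
  The Pareto condition \<alpha>1 h1^\<sigma> = \<alpha>2 h2^(2\<sigma>) forces h1 = c h2^2, so the two actuarially fair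
  Pareto optimal rules are q = afpo_share2 c s, the nonnegative root of c q^2 + q = s, and
  s - q = c q^2: a concave and a convex increasing function of the aggregate loss, with c fixed by
  actuarial fairness. Since the gamma laws have equal means and \<nu> \<le> \<mu>, S is smaller than T in
  convex order; for a share h = afpo_share_i c this brackets a scale r (r \<ge> 1 for the concave
  share, r \<le> 1 for the convex one) with E h(r T) = E h(S), and the comparison splits in two.
  The variables h(r T) and h'(T), h' the corresponding share of the other pool, are two functions
  of the same variable with equal means that cross once, so the cut criterion of Karlin and
  Novikoff compares them. The variables h(S) and h(r T) are one increasing function under the laws
  Gamma(\<mu>, \<lambda>) and Gamma(\<nu>, \<kappa> / r), whose densities cross at most twice and give h equal
  means; the chord of the convex test function between the two crossings compares them.
\<close>

section \<open>Convex functions of a real variable\<close>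

lemma convex_on_slopes_le:
  fixes \<phi> :: "real \<Rightarrow> real"
  assumes "convex_on I \<phi>" "y \<in> I" "w \<in> I" "y < x" "x < w"
  shows "(\<phi> x - \<phi> y) / (x - y) \<le> (\<phi> w - \<phi> x) / (w - x)"
proof -
  have "(\<phi> y - \<phi> x) / (y - x) \<le> (\<phi> x - \<phi> w) / (x - w)"
    using convex_on_slope_le[OF assms] by linarith
  moreover have "(\<phi> y - \<phi> x) / (y - x) = (\<phi> x - \<phi> y) / (x - y)"
    and "(\<phi> x - \<phi> w) / (x - w) = (\<phi> w - \<phi> x) / (w - x)"
    by (simp_all add: divide_simps) (simp_all add: algebra_simps)
  ultimately show ?thesis by simp
qed

lemma convex_on_ge_chord_outside:
  fixes \<phi> :: "real \<Rightarrow> real"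
  assumes cv: "convex_on I \<phi>" and I: "u \<in> I" "v \<in> I" "y \<in> I"
    and uv: "u < v" and y: "y \<le> u \<or> v \<le> y"
  shows "\<phi> u + (\<phi> v - \<phi> u) / (v - u) * (y - u) \<le> \<phi> y"
proof -
  define m where "m = (\<phi> v - \<phi> u) / (v - u)"
  have mv: "\<phi> u + m * (v - u) = \<phi> v"
    using uv by (simp add: m_def)
  consider "y = u" | "y < u" | "v \<le> y" using y by linarith
  then show ?thesis
  proof cases
    case 1
    then show ?thesis by simp
  next
    case 2
    have "(\<phi> u - \<phi> y) / (u - y) \<le> m"
      unfolding m_def using convex_on_slopes_le[OF cv I(3) I(2) 2 uv] .
    then show ?thesis using 2 by (simp add: m_def[symmetric] divide_simps algebra_simps)
  next
    case 3
    show ?thesis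
    proof (cases "y = v")
      case False
      then have "m \<le> (\<phi> y - \<phi> v) / (y - v)"
        unfolding m_def using convex_on_slopes_le[OF cv I(1) I(3) uv] 3 by simp
      then show ?thesis using 3 False mv by (simp add: m_def[symmetric] divide_simps algebra_simps)
    qed (use mv in \<open>simp add: m_def\<close>)
  qed
qed

lemma convex_on_le_chord:
  fixes \<phi> :: "real \<Rightarrow> real"
  assumes cv: "convex_on I \<phi>" and I: "u \<in> I" "v \<in> I" and uv: "u < v" and y: "u \<le> y" "y \<le> v"
  shows "\<phi> y \<le> \<phi> u + (\<phi> v - \<phi> u) / (v - u) * (y - u)"
proof -
  have "{u..v} \<subseteq> I"
    using atMostAtLeast_subset_convex[OF convex_on_imp_convex[OF cv] I uv] .
  then show ?thesis
    using convex_onD_Icc'[OF convex_on_subset[OF cv], of u v y] y by simp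
qed

lemma convex_on_UNIV_supporting_line:
  fixes \<phi> :: "real \<Rightarrow> real"
  assumes "convex_on UNIV \<phi>"
  obtains k where "\<And>y. \<phi> x + k * (y - x) \<le> \<phi> y"
  using convex_le_Inf_differential[OF assms, of x] by auto

lemma chord_slope_le_supporting_slope:
  fixes \<phi> :: "real \<Rightarrow> real"
  assumes cv: "convex_on UNIV \<phi>" and k: "\<And>y. \<phi> x0 + k * (y - x0) \<le> \<phi> y"
    and y: "y1 \<le> y2" "y2 \<le> x0"
  shows "\<phi> y2 - \<phi> y1 \<le> k * (y2 - y1)"
proof (cases "y1 < y2 \<and> y2 < x0")
  case True
  have "(\<phi> y2 - \<phi> y1) / (y2 - y1) \<le> (\<phi> x0 - \<phi> y2) / (x0 - y2)"
    using convex_on_slopes_le[OF cv] True by simp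
  also have "\<dots> \<le> k"
    using k[of y2] True by (simp add: divide_simps algebra_simps)
  finally show ?thesis using True by (simp add: divide_simps mult.commute)
next
  case False
  then consider "y1 = y2" | "y2 = x0" using y by linarith
  then show ?thesis
    by cases (use k[of y1] in \<open>simp_all add: algebra_simps\<close>)
qed

lemma supporting_slope_le_chord_slope:
  fixes \<phi> :: "real \<Rightarrow> real"
  assumes cv: "convex_on UNIV \<phi>" and k: "\<And>y. \<phi> x0 + k * (y - x0) \<le> \<phi> y"
    and y: "x0 \<le> y1" "y1 \<le> y2"
  shows "k * (y2 - y1) \<le> \<phi> y2 - \<phi> y1"
proof (cases "x0 < y1 \<and> y1 < y2")
  case True
  have "k \<le> (\<phi> y1 - \<phi> x0) / (y1 - x0)"
    using k[of y1] True by (simp add: divide_simps algebra_simps)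
  also have "\<dots> \<le> (\<phi> y2 - \<phi> y1) / (y2 - y1)"
    using convex_on_slopes_le[OF cv] True by simp
  finally show ?thesis using True by (simp add: divide_simps mult.commute)
next
  case False
  then consider "y1 = y2" | "x0 = y1" using y by linarith
  then show ?thesis
    by cases (use k[of y2] in \<open>simp_all add: algebra_simps\<close>)
qed

lemma convex_on_strict_sublevel:
  fixes f :: "real \<Rightarrow> real"
  assumes "convex_on S f"
  shows "convex {x \<in> S. f x < c}"
proof (rule convexI)
  fix x y and u v :: real
  assume xy: "x \<in> {x \<in> S. f x < c}" "y \<in> {x \<in> S. f x < c}" and uv: "0 \<le> u" "0 \<le> v" "u + v = 1"
  then have u: "u = 1 - v" by simp
  have S: "convex S" using assms by (rule convex_on_imp_convex)
  then have "u *\<^sub>R x + v *\<^sub>R y \<in> S" using xy uv convexD[OF S, of x y u v] by simp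
  moreover have "f (u *\<^sub>R x + v *\<^sub>R y) \<le> u * f x + v * f y"
    using convex_onD[OF assms, of v x y] xy uv unfolding u by simp
  moreover have "u * f x + v * f y < c"
    using xy uv by (cases "u = 0") (auto intro: convex_bound_lt)
  ultimately show "u *\<^sub>R x + v *\<^sub>R y \<in> {x \<in> S. f x < c}" by simp
qed

section \<open>Integrals against densities on the half-line\<close>

lemma integral_pos_if_pos_on_interval:
  fixes w :: "real \<Rightarrow> real"
  assumes w: "integrable lborel w" "\<And>s. 0 \<le> w s"
    and pos: "a < b" "\<And>s. a < s \<Longrightarrow> s < b \<Longrightarrow> 0 < w s"
  shows "0 < (\<integral>s. w s \<partial>lborel)"
proof (rule ccontr)
  assume "\<not> ?thesis"
  moreover have "0 \<le> (\<integral>s. w s \<partial>lborel)"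
    using w(2) by simp
  ultimately have "(\<integral>s. w s \<partial>lborel) = 0"
    by simp
  then have "AE s in lborel. w s = 0"
    using integral_nonneg_eq_0_iff_AE[OF w(1)] w(2) by simp
  then have "AE s in lborel. s \<notin> {a<..<b}"
    by eventually_elim (use pos(2) in force)
  then have "emeasure lborel {a<..<b} = 0"
    by (subst (asm) AE_iff_measurable[of "{a<..<b}"]) auto
  then show False using pos(1) by simp
qed

lemma integrable_between:
  fixes f :: "'a \<Rightarrow> real"
  assumes "integrable M l" "integrable M u" "f \<in> borel_measurable M"
    and "AE x in M. l x \<le> f x" "AE x in M. f x \<le> u x"
  shows "integrable M f"
proof (rule Bochner_Integration.integrable_bound)
  show "integrable M (\<lambda>x. \<bar>l x\<bar> + \<bar>u x\<bar>)"
    using assms(1,2) by simp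
  show "AE x in M. norm (f x) \<le> norm (\<bar>l x\<bar> + \<bar>u x\<bar>)"
    using assms(4,5) by eventually_elim auto
qed (use assms(3) in simp)

lemma integrable_mult_if_linear_bound:
  fixes a w :: "real \<Rightarrow> real"
  assumes w: "integrable lborel (\<lambda>s. s * w s)" "\<And>s. 0 \<le> w s" "\<And>s. s \<le> 0 \<Longrightarrow> w s = 0"
    and [measurable]: "a \<in> borel_measurable borel" "w \<in> borel_measurable borel"
    and bound: "\<And>s. 0 \<le> s \<Longrightarrow> \<bar>a s\<bar> \<le> C * s"
  shows "integrable lborel (\<lambda>s. a s * w s)"
proof (rule Bochner_Integration.integrable_bound)
  show "integrable lborel (\<lambda>s. C * (s * w s))"
    using w(1) by simp
  have "\<bar>a s * w s\<bar> \<le> \<bar>C * (s * w s)\<bar>" for s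
  proof (cases "s \<le> 0")
    case False
    then have "0 \<le> C * s"
      using bound[of s] by (meson abs_ge_zero le_cases order.trans)
    then have "0 \<le> C"
      using False by (simp add: zero_le_mult_iff)
    moreover have "\<bar>a s\<bar> * w s \<le> (C * s) * w s"
      using bound[of s] w(2)[of s] False by (intro mult_right_mono) auto
    ultimately show ?thesis using w(2)[of s] False by (simp add: abs_mult)
  qed (use w(3) in simp)
  then show "AE s in lborel. norm (a s * w s) \<le> norm (C * (s * w s))"
    by simp
qed simp

lemma lborel_integral_comp_mult:
  fixes F g :: "real \<Rightarrow> real"
  assumes r: "r > 0"
  shows "integrable lborel (\<lambda>x. F (r * x) * g x) \<longleftrightarrow> integrable lborel (\<lambda>u. F u * (g (u / r) / r))"
    and "(\<integral>x. F (r * x) * g x \<partial>lborel) = (\<integral>u. F u * (g (u / r) / r) \<partial>lborel)"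
proof -
  define Q where "Q u = F u * (g (u / r) / r)" for u
  have e: "(\<lambda>x. F (r * x) * g x) = (\<lambda>x. r * Q (0 + r * x))"
    using r by (auto simp: Q_def)
  show "integrable lborel (\<lambda>x. F (r * x) * g x) \<longleftrightarrow> integrable lborel (\<lambda>u. F u * (g (u / r) / r))"
    unfolding e Q_def[symmetric] using lborel_integrable_real_affine_iff[of r Q 0] r by simp
  show "(\<integral>x. F (r * x) * g x \<partial>lborel) = (\<integral>u. F u * (g (u / r) / r) \<partial>lborel)"
    unfolding e Q_def[symmetric] using lborel_integral_real_affine[of r Q 0] r by simp
qed

lemma continuous_on_integral_comp_mult:
  fixes R g :: "real \<Rightarrow> real"
  assumes g: "integrable lborel (\<lambda>s. s * g s)" "\<And>s. 0 \<le> g s" "\<And>s. s \<le> 0 \<Longrightarrow> g s = 0"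
    and [measurable]: "g \<in> borel_measurable borel" "R \<in> borel_measurable borel"
    and R: "\<And>x. 0 \<le> x \<Longrightarrow> \<bar>R x\<bar> \<le> x"
    and lip: "\<And>x y. 0 \<le> x \<Longrightarrow> x \<le> y \<Longrightarrow> \<bar>R y - R x\<bar> \<le> y - x"
  shows "continuous_on {0..} (\<lambda>r. \<integral>s. R (r * s) * g s \<partial>lborel)"
proof -
  define L where "L = (\<integral>s. s * g s \<partial>lborel)"
  have sg: "0 \<le> s * g s" for s
    using g(2)[of s] g(3)[of s] by (cases "s \<le> 0") auto
  have int: "integrable lborel (\<lambda>s. R (r * s) * g s)" if "0 \<le> r" for r
    by (rule integrable_mult_if_linear_bound[OF g, of _ r]) (use R that in auto)
  have lip2: "\<bar>R x - R y\<bar> \<le> \<bar>x - y\<bar>" if "0 \<le> x" "0 \<le> y" for x y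
    using lip[of x y] lip[of y x] that by (cases "x \<le> y") (auto simp: abs_minus_commute)
  have "L-lipschitz_on {0..} (\<lambda>r. \<integral>s. R (r * s) * g s \<partial>lborel)"
  proof (rule lipschitz_onI)
    fix x y :: real
    assume xy: "x \<in> {0..}" "y \<in> {0..}"
    have "\<bar>(R (x * s) - R (y * s)) * g s\<bar> \<le> \<bar>x - y\<bar> * (s * g s)" for s
    proof (cases "s \<le> 0")
      case False
      have "\<bar>R (x * s) - R (y * s)\<bar> \<le> \<bar>x - y\<bar> * s"
        using lip2[of "x * s" "y * s"] xy False by (simp add: abs_mult flip: left_diff_distrib)
      then show ?thesis
        using g(2)[of s] by (simp add: abs_mult mult_right_mono flip: mult.assoc)
    qed (use g(3) in simp)
    then have "\<bar>\<integral>s. (R (x * s) - R (y * s)) * g s \<partial>lborel\<bar> \<le> (\<integral>s. \<bar>x - y\<bar> * (s * g s) \<partial>lborel)"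
      using int xy g(1) by (intro integral_abs_bound_integral) (auto simp: left_diff_distrib)
    also have "\<dots> = L * dist x y"
      by (simp add: L_def dist_real_def)
    also have "(\<integral>s. (R (x * s) - R (y * s)) * g s \<partial>lborel)
        = (\<integral>s. R (x * s) * g s \<partial>lborel) - (\<integral>s. R (y * s) * g s \<partial>lborel)"
      using int xy by (simp add: left_diff_distrib)
    finally show "dist (\<integral>s. R (x * s) * g s \<partial>lborel) (\<integral>s. R (y * s) * g s \<partial>lborel) \<le> L * dist x y"
      by (simp add: dist_real_def)
  qed (simp add: L_def sg)
  then show ?thesis by (rule lipschitz_on_continuous_on)
qed

lemma IVT_sqrt_growth:
  fixes \<Phi> :: "real \<Rightarrow> real"
  assumes cont: "continuous_on {1..} \<Phi>" and le: "\<Phi> 1 \<le> m" and pos: "0 < \<Phi> 1"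
    and growth: "\<And>R. 1 \<le> R \<Longrightarrow> sqrt R * \<Phi> 1 \<le> \<Phi> R"
  obtains r where "1 \<le> r" "\<Phi> r = m"
proof -
  define R where "R = max 1 ((m / \<Phi> 1)\<^sup>2)"
  have R: "1 \<le> R"
    by (simp add: R_def)
  have "m / \<Phi> 1 \<le> sqrt ((m / \<Phi> 1)\<^sup>2)"
    by (simp only: real_sqrt_abs abs_ge_self)
  also have "\<dots> \<le> sqrt R"
    by (simp add: R_def del: real_sqrt_abs)
  finally have "m \<le> \<Phi> R"
    using pos growth[OF R] by (simp add: pos_divide_le_eq)
  then obtain r where "1 \<le> r" "r \<le> R" "\<Phi> r = m"
    using IVT'[of \<Phi> 1 m R] le R continuous_on_subset[OF cont, of "{1..R}"] by auto
  then show ?thesis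
    using that by blast
qed

section \<open>Convex order from crossing conditions\<close>

lemma single_crossing_supporting_slope:
  fixes a b \<phi> :: "real \<Rightarrow> real"
  assumes cv: "convex_on UNIV \<phi>" and mono: "mono_on {0..} a"
    and crossing: "\<And>y z. 0 < y \<Longrightarrow> y \<le> z \<Longrightarrow> a y < b y \<Longrightarrow> a z < b z"
    and crosses: "\<exists>z>0. a z < b z"
  obtains k where "\<And>s. 0 < s \<Longrightarrow> k * (b s - a s) \<le> \<phi> (b s) - \<phi> (a s)"
proof -
  define P where "P = {z. 0 < z \<and> a z < b z}"
  define z0 where "z0 = Inf P"
  have P: "P \<noteq> {}" "bdd_below P"
    using crosses by (auto simp: P_def intro!: bdd_belowI[of _ 0])
  have z0: "0 \<le> z0"
    unfolding z0_def using P(1) by (intro cInf_greatest) (auto simp: P_def)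
  obtain k where k: "\<And>y. \<phi> (a z0) + k * (y - a z0) \<le> \<phi> y"
    using convex_on_UNIV_supporting_line[OF cv, where x = "a z0"] by blast
  \<comment> \<open>One supporting line at the crossing point serves every s: left of z0 we have
    b s \<le> a s \<le> a z0, right of it a z0 \<le> a s < b s.\<close>
  have "k * (b s - a s) \<le> \<phi> (b s) - \<phi> (a s)" if s: "0 < s" for s
  proof (cases s z0 rule: linorder_cases)
    case less
    then have "s \<notin> P"
      unfolding z0_def using cInf_lower[OF _ P(2)] by force
    then have "b s \<le> a s"
      using s by (auto simp: P_def)
    moreover have "a s \<le> a z0"
      using mono less s z0 by (auto simp: mono_on_def)
    ultimately show ?thesis
      using chord_slope_le_supporting_slope[OF cv k, of "b s" "a s"] by (simp add: algebra_simps)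
  next
    case equal
    then show ?thesis using k[of "b s"] by (simp add: algebra_simps)
  next
    case greater
    then obtain p where "p \<in> P" "p < s"
      unfolding z0_def using cInf_less_iff[OF P] by auto
    then have "a s < b s"
      using crossing[of p s] by (auto simp: P_def)
    moreover have "a z0 \<le> a s"
      using mono greater z0 by (auto simp: mono_on_def)
    ultimately show ?thesis
      by (intro supporting_slope_le_chord_slope[OF cv k]) auto
  qed
  then show ?thesis using that by blast
qed

lemma single_crossing_AE_supporting_slope:
  fixes a b g \<phi> :: "real \<Rightarrow> real"
  assumes cv: "convex_on UNIV \<phi>"
    and g: "\<And>s. 0 \<le> g s" "\<And>s. s \<le> 0 \<Longrightarrow> g s = 0"
    and ab: "integrable lborel (\<lambda>s. a s * g s)" "integrable lborel (\<lambda>s. b s * g s)"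
      "(\<integral>s. a s * g s \<partial>lborel) = (\<integral>s. b s * g s \<partial>lborel)"
    and mono: "mono_on {0..} a"
    and crossing: "\<And>y z. 0 < y \<Longrightarrow> y \<le> z \<Longrightarrow> a y < b y \<Longrightarrow> a z < b z"
  obtains k where "AE s in lborel. k * ((b s - a s) * g s) \<le> \<phi> (b s) * g s - \<phi> (a s) * g s"
proof (cases "\<exists>z>0. a z < b z")
  case True
  then obtain k where k: "\<And>s. 0 < s \<Longrightarrow> k * (b s - a s) \<le> \<phi> (b s) - \<phi> (a s)"
    using single_crossing_supporting_slope[where b = b, OF cv mono _ True] crossing by blast
  have "k * ((b s - a s) * g s) \<le> \<phi> (b s) * g s - \<phi> (a s) * g s" for s
    using mult_right_mono[OF k g(1), of s] g(2)[of s]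
    by (cases "0 < s") (auto simp: algebra_simps)
  then show ?thesis using that by blast
next
  case False
  \<comment> \<open>Then b \<le> a on the support of g, and equal means force a = b almost everywhere there.\<close>
  have "0 \<le> (a s - b s) * g s" for s
  proof (cases "0 < s")
    case True
    then have "\<not> a s < b s" using False by blast
    then show ?thesis using g(1) by simp
  qed (use g(2) in simp)
  moreover have "integrable lborel (\<lambda>s. (a s - b s) * g s)"
    and "(\<integral>s. (a s - b s) * g s \<partial>lborel) = 0"
    using ab by (simp_all add: left_diff_distrib)
  ultimately have "AE s in lborel. (a s - b s) * g s = 0"
    using integral_nonneg_eq_0_iff_AE by blast
  then have "AE s in lborel. 0 * ((b s - a s) * g s) \<le> \<phi> (b s) * g s - \<phi> (a s) * g s"
    by eventually_elim auto
  then show ?thesis using that by blast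
qed

lemma single_crossing_convex_integral_le:
  fixes a b g \<phi> :: "real \<Rightarrow> real"
  assumes cv: "convex_on UNIV \<phi>"
    and g: "\<And>s. 0 \<le> g s" "\<And>s. s \<le> 0 \<Longrightarrow> g s = 0" "integrable lborel g"
    and [measurable]: "a \<in> borel_measurable borel" "b \<in> borel_measurable borel"
    and ab: "integrable lborel (\<lambda>s. a s * g s)" "integrable lborel (\<lambda>s. b s * g s)"
      "(\<integral>s. a s * g s \<partial>lborel) = (\<integral>s. b s * g s \<partial>lborel)"
    and mono: "mono_on {0..} a"
    and crossing: "\<And>y z. 0 < y \<Longrightarrow> y \<le> z \<Longrightarrow> a y < b y \<Longrightarrow> a z < b z"
    and \<phi>b: "integrable lborel (\<lambda>s. \<phi> (b s) * g s)"
  shows "integrable lborel (\<lambda>s. \<phi> (a s) * g s)"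
    and "(\<integral>s. \<phi> (a s) * g s \<partial>lborel) \<le> (\<integral>s. \<phi> (b s) * g s \<partial>lborel)"
proof -
  have [measurable]: "\<phi> \<in> borel_measurable borel" "g \<in> borel_measurable borel"
    using convex_on_continuous[OF open_UNIV cv] g(3) by (auto intro: borel_measurable_continuous_onI)
  obtain k where k: "AE s in lborel. k * ((b s - a s) * g s) \<le> \<phi> (b s) * g s - \<phi> (a s) * g s"
    using single_crossing_AE_supporting_slope[where b = b, OF cv g(1,2) ab mono] crossing by blast
  have ba: "integrable lborel (\<lambda>s. k * ((b s - a s) * g s))"
    using ab by (simp add: left_diff_distrib)
  obtain k0 where k0: "\<And>y. \<phi> 0 + k0 * (y - 0) \<le> \<phi> y"
    using convex_on_UNIV_supporting_line[OF cv, where x = 0] by blast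
  show int: "integrable lborel (\<lambda>s. \<phi> (a s) * g s)"
  proof (rule integrable_between)
    show "integrable lborel (\<lambda>s. \<phi> 0 * g s + k0 * (a s * g s))"
      using g(3) ab(1) by simp
    show "AE s in lborel. \<phi> 0 * g s + k0 * (a s * g s) \<le> \<phi> (a s) * g s"
    proof (rule AE_I2)
      fix s
      show "\<phi> 0 * g s + k0 * (a s * g s) \<le> \<phi> (a s) * g s"
        using mult_right_mono[OF k0[of "a s"] g(1)[of s]] by (simp add: algebra_simps)
    qed
    show "integrable lborel (\<lambda>s. \<phi> (b s) * g s - k * ((b s - a s) * g s))"
      using \<phi>b ba by simp
    show "AE s in lborel. \<phi> (a s) * g s \<le> \<phi> (b s) * g s - k * ((b s - a s) * g s)"
      using k by eventually_elim simp
  qed simp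
  have "0 = (\<integral>s. k * ((b s - a s) * g s) \<partial>lborel)"
    using ab by (simp add: left_diff_distrib)
  also have "\<dots> \<le> (\<integral>s. \<phi> (b s) * g s - \<phi> (a s) * g s \<partial>lborel)"
    using ba int \<phi>b k by (intro integral_mono_AE) auto
  finally show "(\<integral>s. \<phi> (a s) * g s \<partial>lborel) \<le> (\<integral>s. \<phi> (b s) * g s \<partial>lborel)"
    using int \<phi>b by simp
qed

lemma mem_convex_real_between:
  fixes N :: "real set"
  shows "convex N \<Longrightarrow> n1 \<in> N \<Longrightarrow> n2 \<in> N \<Longrightarrow> n1 \<le> s \<Longrightarrow> s \<le> n2 \<Longrightarrow> s \<in> N"
  using mem_is_interval_1_I is_interval_convex_1 by metis

lemma mem_convex_real_between_Inf_Sup: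
  fixes N :: "real set"
  assumes "convex N" "N \<noteq> {}" "bdd_below N" "bdd_above N" "Inf N < s" "s < Sup N"
  shows "s \<in> N"
proof -
  obtain n1 n2 where "n1 \<in> N" "n1 < s" "n2 \<in> N" "s < n2"
    using assms(2-6) cInf_less_iff[of N s] less_cSup_iff[of N s] by auto
  then show ?thesis
    using mem_convex_real_between[OF assms(1)] by (meson less_imp_le)
qed

lemma two_moment_dominated_integral_nonneg:
  fixes a D \<psi> :: "real \<Rightarrow> real"
  assumes D: "integrable lborel D" "(\<integral>s. D s \<partial>lborel) = 0"
    and aD: "integrable lborel (\<lambda>s. a s * D s)" "(\<integral>s. a s * D s \<partial>lborel) = 0"
    and \<psi>D: "integrable lborel (\<lambda>s. \<psi> s * D s)"
    and dominated: "AE s in lborel. 0 \<le> (\<psi> s - (\<alpha> + \<beta> * a s)) * D s"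
  shows "0 \<le> (\<integral>s. \<psi> s * D s \<partial>lborel)"
proof -
  have affine: "integrable lborel (\<lambda>s. (\<alpha> + \<beta> * a s) * D s)"
    "(\<integral>s. (\<alpha> + \<beta> * a s) * D s \<partial>lborel) = 0"
    using D aD by (simp_all add: distrib_right mult.assoc)
  have "0 \<le> (\<integral>s. (\<psi> s - (\<alpha> + \<beta> * a s)) * D s \<partial>lborel)"
    using dominated by (rule integral_nonneg_AE)
  also have "\<dots> = (\<integral>s. \<psi> s * D s \<partial>lborel)"
    using \<psi>D affine by (simp add: left_diff_distrib)
  finally show ?thesis .
qed

lemma two_crossings_chord_dominated:
  fixes a D \<phi> :: "real \<Rightarrow> real"
  assumes cv: "convex_on I \<phi>" and aI: "\<And>s. 0 \<le> s \<Longrightarrow> a s \<in> I"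
    and a: "strict_mono_on {0..} a"
    and x12: "0 \<le> x1" "x1 < x2"
    and D0: "\<And>s. s \<le> 0 \<Longrightarrow> D s = 0"
    and outside: "\<And>s. 0 < s \<Longrightarrow> s < x1 \<or> x2 < s \<Longrightarrow> 0 \<le> D s"
    and inside: "\<And>s. x1 < s \<Longrightarrow> s < x2 \<Longrightarrow> D s \<le> 0"
    and \<beta>: "\<beta> = (\<phi> (a x2) - \<phi> (a x1)) / (a x2 - a x1)"
  shows "0 \<le> (\<phi> (a s) - ((\<phi> (a x1) - \<beta> * a x1) + \<beta> * a s)) * D s"
proof -
  define u v where "u = a x1" and "v = a x2"
  have uv: "u \<in> I" "v \<in> I" "u < v"
    using x12 aI strict_mono_onD[OF a, of x1 x2] by (auto simp: u_def v_def)
  have \<beta>: "\<beta> = (\<phi> v - \<phi> u) / (v - u)"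
    using \<beta> by (simp add: u_def v_def)
  consider "s \<le> 0" | "0 < s" "s < x1 \<or> x2 < s" | "s = x1 \<or> s = x2" | "x1 < s" "s < x2"
    by linarith
  then show ?thesis
  proof cases
    case 1
    then show ?thesis by (simp add: D0)
  next
    case 2
    then have "a s \<le> u \<or> v \<le> a s"
      using x12 strict_mono_on_leD[OF a] by (auto simp: u_def v_def)
    then have "\<phi> u + \<beta> * (a s - u) \<le> \<phi> (a s)"
      using convex_on_ge_chord_outside[OF cv uv(1,2) aI uv(3)] 2 by (simp add: \<beta>)
    then show ?thesis
      using outside[OF 2] by (intro mult_nonneg_nonneg) (simp_all add: u_def algebra_simps)
  next
    case 3
    then have "\<phi> (a s) = \<phi> u + \<beta> * (a s - u)"
      using uv by (auto simp: u_def v_def \<beta>)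
    then show ?thesis by (simp add: u_def algebra_simps)
  next
    case 4
    then have "u \<le> a s" "a s \<le> v"
      using x12 strict_mono_on_leD[OF a] by (auto simp: u_def v_def)
    then have "\<phi> (a s) \<le> \<phi> u + \<beta> * (a s - u)"
      using convex_on_le_chord[OF cv uv] by (simp add: \<beta>)
    then show ?thesis
      using inside[OF 4] by (intro mult_nonpos_nonpos) (simp_all add: u_def algebra_simps)
  qed
qed

lemma two_moment_negative_set_bdd_above:
  fixes a D :: "real \<Rightarrow> real"
  assumes a: "strict_mono_on {0..} a"
    and D0: "\<And>s. s \<le> 0 \<Longrightarrow> D s = 0"
    and D: "integrable lborel D" "(\<integral>s. D s \<partial>lborel) = 0"
    and aD: "integrable lborel (\<lambda>s. a s * D s)" "(\<integral>s. a s * D s \<partial>lborel) = 0"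
    and N: "convex {s. 0 < s \<and> D s < 0}"
  shows "bdd_above {s. 0 < s \<and> D s < 0}"
proof (rule ccontr)
  define N where "N = {s. 0 < s \<and> D s < 0}"
  assume "\<not> bdd_above {s. 0 < s \<and> D s < 0}"
  then have unbounded: "\<not> bdd_above N" and N_ne_bdd: "N \<noteq> {}" "bdd_below N"
    by (auto simp: N_def intro!: bdd_belowI[of _ 0])
  define x1 where "x1 = Inf N"
  have x1: "0 \<le> x1"
    unfolding x1_def using N_ne_bdd by (intro cInf_greatest) (auto simp: N_def)
  have below: "s \<notin> N" if "s < x1" for s
    using that cInf_lower[OF _ N_ne_bdd(2)] by (force simp: x1_def)
  have above: "s \<in> N" if s: "x1 < s" for s
  proof -
    obtain n1 where "n1 \<in> N" "n1 < s"
      using s cInf_less_iff[OF N_ne_bdd] by (auto simp: x1_def)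
    moreover obtain n2 where "n2 \<in> N" "s < n2"
      using unbounded by (meson bdd_above_def not_le)
    ultimately show ?thesis
      using mem_convex_real_between[OF N[folded N_def]] by (meson less_imp_le)
  qed
  \<comment> \<open>N would contain the half-line above x1, making E nonnegative, positive beyond x1,
    and yet of integral zero by the two moment conditions.\<close>
  define E where "E s = (a x1 - a s) * D s" for s
  have "0 < (\<integral>s. E s \<partial>lborel)"
  proof (rule integral_pos_if_pos_on_interval)
    show "integrable lborel E"
      unfolding E_def using D(1) aD(1) by (simp add: left_diff_distrib)
    show "0 \<le> E s" for s
    proof (cases s x1 rule: linorder_cases)
      case less
      then show ?thesis
        using below[OF less] a x1 D0[of s]
        by (cases "0 < s") (auto simp: E_def N_def strict_mono_on_leD not_less)
    next
      case greater
      then have "a x1 < a s"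
        using x1 by (intro strict_mono_onD[OF a]) auto
      then show ?thesis
        using above[OF greater] by (auto simp: E_def N_def mult_nonpos_nonpos)
    qed (simp add: E_def)
    show "0 < E s" if "x1 < s" "s < x1 + 1" for s
      using above[of s] strict_mono_onD[OF a, of x1 s] x1 that by (auto simp: E_def N_def mult_neg_neg)
  qed simp
  moreover have "(\<integral>s. E s \<partial>lborel) = 0"
    unfolding E_def using D aD by (simp add: left_diff_distrib)
  ultimately show False by simp
qed

lemma two_moment_sign_changes:
  fixes a D :: "real \<Rightarrow> real"
  assumes a: "strict_mono_on {0..} a"
    and D0: "\<And>s. s \<le> 0 \<Longrightarrow> D s = 0"
    and D: "integrable lborel D" "(\<integral>s. D s \<partial>lborel) = 0"
    and aD: "integrable lborel (\<lambda>s. a s * D s)" "(\<integral>s. a s * D s \<partial>lborel) = 0"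
    and N: "convex {s. 0 < s \<and> D s < 0}"
    and not_singleton: "\<not> (\<exists>x. {s. 0 < s \<and> D s < 0} \<subseteq> {x})"
  obtains x1 x2 where "0 \<le> x1" "x1 < x2"
    "\<And>s. 0 < s \<Longrightarrow> s < x1 \<or> x2 < s \<Longrightarrow> 0 \<le> D s" "\<And>s. x1 < s \<Longrightarrow> s < x2 \<Longrightarrow> D s \<le> 0"
proof -
  define N where "N = {s. 0 < s \<and> D s < 0}"
  obtain n1 n2 where n: "n1 \<in> N" "n2 \<in> N" "n1 < n2"
    using not_singleton unfolding N_def[symmetric]
    by (metis insert_subset linorder_neqE_linordered_idom subsetI singletonI)
  have bdd: "bdd_below N" "bdd_above N"
    using two_moment_negative_set_bdd_above[OF a D0 D aD N]
    by (auto simp: N_def intro!: bdd_belowI[of _ 0])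
  define x1 x2 where "x1 = Inf N" and "x2 = Sup N"
  show ?thesis
  proof (rule that)
    show "0 \<le> x1" "x1 < x2"
      using n bdd cInf_lower[of n1 N] cSup_upper[of n2 N] cInf_greatest[of N 0]
      by (fastforce simp: x1_def x2_def N_def)+
    show "0 \<le> D s" if "0 < s" "s < x1 \<or> x2 < s" for s
    proof -
      have "s \<notin> N"
        using that bdd cInf_lower[of s N] cSup_upper[of s N] by (auto simp: x1_def x2_def)
      then show ?thesis
        using that(1) by (simp add: N_def)
    qed
    show "D s \<le> 0" if "x1 < s" "s < x2" for s
    proof -
      have "s \<in> N"
        using mem_convex_real_between_Inf_Sup[of N s] N n bdd that by (auto simp: N_def x1_def x2_def)
      then show ?thesis by (simp add: N_def)
    qed
  qed
qed

lemma two_moment_convex_integral_nonneg: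
  fixes a D \<phi> :: "real \<Rightarrow> real"
  assumes cv: "convex_on I \<phi>" and aI: "\<And>s. 0 \<le> s \<Longrightarrow> a s \<in> I"
    and a: "strict_mono_on {0..} a"
    and D0: "\<And>s. s \<le> 0 \<Longrightarrow> D s = 0"
    and D: "integrable lborel D" "(\<integral>s. D s \<partial>lborel) = 0"
    and aD: "integrable lborel (\<lambda>s. a s * D s)" "(\<integral>s. a s * D s \<partial>lborel) = 0"
    and \<phi>D: "integrable lborel (\<lambda>s. \<phi> (a s) * D s)"
    and N: "convex {s. 0 < s \<and> D s < 0}"
  shows "0 \<le> (\<integral>s. \<phi> (a s) * D s \<partial>lborel)"
proof (cases "\<exists>x. {s. 0 < s \<and> D s < 0} \<subseteq> {x}")
  case True
  then obtain x where x: "{s. 0 < s \<and> D s < 0} \<subseteq> {x}" by blast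
  have "AE s in lborel. 0 \<le> D s"
    using AE_lborel_singleton[of x]
  proof eventually_elim
    case (elim s)
    then show ?case
      using x D0[of s] by (cases "0 < s") auto
  qed
  then have "AE s in lborel. D s = 0"
    using integral_nonneg_eq_0_iff_AE[OF D(1)] D(2) by simp
  then have "AE s in lborel. \<phi> (a s) * D s = 0"
    by eventually_elim simp
  then show ?thesis
    by (simp add: integral_eq_zero_AE)
next
  case False
  then obtain x1 x2 where x12: "0 \<le> x1" "x1 < x2"
    and outside: "\<And>s. 0 < s \<Longrightarrow> s < x1 \<or> x2 < s \<Longrightarrow> 0 \<le> D s"
    and inside: "\<And>s. x1 < s \<Longrightarrow> s < x2 \<Longrightarrow> D s \<le> 0"
    using two_moment_sign_changes[OF a D0 D aD N] by blast
  define \<beta> where "\<beta> = (\<phi> (a x2) - \<phi> (a x1)) / (a x2 - a x1)"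
  have "AE s in lborel. 0 \<le> (\<phi> (a s) - ((\<phi> (a x1) - \<beta> * a x1) + \<beta> * a s)) * D s"
    using two_crossings_chord_dominated[where D = D, OF cv aI a x12 D0 outside inside \<beta>_def] by simp
  then show ?thesis
    by (rule two_moment_dominated_integral_nonneg[OF D aD \<phi>D])
qed

lemma density_crossing_convex_integral_le:
  fixes a f g \<phi> :: "real \<Rightarrow> real"
  assumes cv: "convex_on I \<phi>" and aI: "\<And>s. 0 \<le> s \<Longrightarrow> a s \<in> I"
    and a: "strict_mono_on {0..} a"
    and f0: "\<And>s. s \<le> 0 \<Longrightarrow> f s = 0" and g0: "\<And>s. s \<le> 0 \<Longrightarrow> g s = 0"
    and fg: "integrable lborel f" "integrable lborel g" "(\<integral>s. f s \<partial>lborel) = (\<integral>s. g s \<partial>lborel)"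
    and afg: "integrable lborel (\<lambda>s. a s * f s)" "integrable lborel (\<lambda>s. a s * g s)"
      "(\<integral>s. a s * f s \<partial>lborel) = (\<integral>s. a s * g s \<partial>lborel)"
    and \<phi>fg: "integrable lborel (\<lambda>s. \<phi> (a s) * f s)" "integrable lborel (\<lambda>s. \<phi> (a s) * g s)"
    and N: "convex {s. 0 < s \<and> g s < f s}"
  shows "(\<integral>s. \<phi> (a s) * f s \<partial>lborel) \<le> (\<integral>s. \<phi> (a s) * g s \<partial>lborel)"
proof -
  have "0 \<le> (\<integral>s. \<phi> (a s) * (g s - f s) \<partial>lborel)"
  proof (rule two_moment_convex_integral_nonneg[OF cv aI a])
    show "integrable lborel (\<lambda>s. g s - f s)" "(\<integral>s. g s - f s \<partial>lborel) = 0"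
      using fg by simp_all
    show "integrable lborel (\<lambda>s. a s * (g s - f s))" "(\<integral>s. a s * (g s - f s) \<partial>lborel) = 0"
      using afg by (simp_all add: right_diff_distrib)
    show "integrable lborel (\<lambda>s. \<phi> (a s) * (g s - f s))"
      using \<phi>fg by (simp add: right_diff_distrib)
  qed (use f0 g0 N in simp_all)
  then show ?thesis
    using \<phi>fg by (simp add: right_diff_distrib)
qed

section \<open>Gamma densities and gamma distributed variables\<close>

lemma gamma_density_nonpos [simp]: "s \<le> 0 \<Longrightarrow> gamma_density mu lam s = 0"
  by (simp add: gamma_density_def)

lemma gamma_density_nonneg: "0 < mu \<Longrightarrow> 0 < lam \<Longrightarrow> 0 \<le> gamma_density mu lam s"
  by (simp add: gamma_density_def Gamma_real_nonneg)

lemma gamma_density_pos: "0 < mu \<Longrightarrow> 0 < lam \<Longrightarrow> 0 < s \<Longrightarrow> 0 < gamma_density mu lam s"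
  by (simp add: gamma_density_def Gamma_real_pos)

lemma borel_measurable_gamma_density [measurable]: "gamma_density mu lam \<in> borel_measurable borel"
  unfolding gamma_density_def[abs_def] by measurable

lemma gamma_density_rescale:
  assumes "0 < r" "0 < lam" "0 < mu"
  shows "gamma_density mu lam (s / r) / r = gamma_density mu (lam / r) s"
proof (cases "0 < s")
  case True
  have "(s / r) powr (mu - 1) = s powr (mu - 1) / r powr (mu - 1)"
    and "(lam / r) powr mu = lam powr mu / (r * r powr (mu - 1))"
    and "exp (- lam * (s / r)) = exp (- (lam / r) * s)"
    using True assms by (simp_all add: powr_divide powr_mult_base)
  then show ?thesis
    using True assms Gamma_real_pos[OF assms(3)]
    by (simp only: gamma_density_def if_True divide_pos_pos) (simp add: field_simps)
qed (simp add: assms divide_nonpos_pos)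

lemma gamma_density_unit_rate:
  "gamma_density mu 1 s = indicator {0..} s * s powr (mu - 1) / exp s / Gamma mu"
  by (cases "0 < s") (auto simp: gamma_density_def exp_minus field_simps indicator_def)

lemma gamma_density_integral:
  assumes mu: "0 < mu" and lam: "0 < lam"
  shows "integrable lborel (gamma_density mu lam)" and "(\<integral>s. gamma_density mu lam s \<partial>lborel) = 1"
proof -
  define G where "G = (\<lambda>t::real. indicator {0..} t * t powr (mu - 1) / exp t)"
  have G_nonneg: "AE t in lborel. 0 \<le> G t"
    by (simp add: G_def)
  have "(\<integral>\<^sup>+t. ennreal (G t) \<partial>lborel) = ennreal (Gamma mu)"
    using Gamma_conv_nn_integral_real[OF mu] by (simp add: G_def)
  then have G: "integrable lborel G" "(\<integral>t. G t \<partial>lborel) = Gamma mu"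
    using integrableI_nn_integral_finite[OF _ G_nonneg] integral_eq_nn_integral[OF _ G_nonneg]
      Gamma_real_pos[OF mu] by (auto simp: G_def)
  have unit: "gamma_density mu 1 = (\<lambda>t. G t / Gamma mu)"
    by (simp add: gamma_density_unit_rate G_def fun_eq_iff)
  have scaled: "gamma_density mu lam = (\<lambda>s. lam * gamma_density mu 1 (0 + lam * s))"
  proof
    fix s
    show "gamma_density mu lam s = lam * gamma_density mu 1 (0 + lam * s)"
      using gamma_density_rescale[of "1 / lam" 1 mu s] mu lam by (simp add: mult.commute)
  qed
  show "integrable lborel (gamma_density mu lam)"
    unfolding scaled unit using lborel_integrable_real_affine[OF G(1), of lam 0] lam by simp
  have "lam * (\<integral>s. G (lam * s) \<partial>lborel) = Gamma mu"
    using lborel_integral_real_affine[of lam G 0] lam G(2) by simp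
  then show "(\<integral>s. gamma_density mu lam s \<partial>lborel) = 1"
    unfolding scaled unit using Gamma_real_pos[OF mu] by simp
qed

lemma gamma_density_mult_self:
  assumes "0 < mu" "0 < lam"
  shows "s * gamma_density mu lam s = mu / lam * gamma_density (mu + 1) lam s"
proof (cases "0 < s")
  case True
  have "mu \<notin> \<int>\<^sub>\<le>\<^sub>0"
    using assms(1) nonpos_Ints_nonpos by fastforce
  then have "lam powr (mu + 1) / Gamma (mu + 1) = lam / mu * (lam powr mu / Gamma mu)"
    using assms by (simp add: Gamma_plus1 powr_add)
  moreover have "s powr (mu + 1 - 1) = s * s powr (mu - 1)"
    using True by (simp add: powr_mult_base)
  ultimately show ?thesis
    using True assms by (simp add: gamma_density_def)
qed simp

lemma gamma_density_mean:
  assumes "0 < mu" "0 < lam"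
  shows "integrable lborel (\<lambda>s. s * gamma_density mu lam s)"
    and "(\<integral>s. s * gamma_density mu lam s \<partial>lborel) = mu / lam"
  using gamma_density_integral[of "mu + 1" lam] assms by (simp_all add: gamma_density_mult_self)

lemma ln_gamma_density:
  assumes "0 < s" "0 < lam" "0 < mu"
  shows "ln (gamma_density mu lam s) = mu * ln lam - ln (Gamma mu) + (mu - 1) * ln s - lam * s"
proof -
  have "0 < Gamma mu" "Gamma mu \<noteq> 0"
    using Gamma_real_pos[OF assms(3)] by simp_all
  then show ?thesis
    using assms by (simp add: gamma_density_def ln_div ln_mult)
qed

lemma convex_gamma_density_less:
  assumes "0 < mu" "0 < nu" "0 < lam" "0 < kap" "nu \<le> mu"
  shows "convex {s. 0 < s \<and> gamma_density nu kap s < gamma_density mu lam s}"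
proof -
  define C where "C = nu * ln kap - ln (Gamma nu) - (mu * ln lam - ln (Gamma mu))"
  define G where "G s = (mu - nu) * - ln s + (C + (lam - kap) * s)" for s
  have "gamma_density nu kap s < gamma_density mu lam s \<longleftrightarrow> G s < 0" if "0 < s" for s
  proof -
    have "gamma_density nu kap s < gamma_density mu lam s
        \<longleftrightarrow> ln (gamma_density nu kap s) < ln (gamma_density mu lam s)"
      using that assms by (simp add: gamma_density_pos)
    then show ?thesis
      using that assms by (simp add: ln_gamma_density G_def C_def algebra_simps)
  qed
  then have "{s. 0 < s \<and> gamma_density nu kap s < gamma_density mu lam s} = {s \<in> {0<..}. G s < 0}"
    by auto
  moreover have "convex_on {0<..} G"
  proof -
    have "convex_on {0<..} (\<lambda>s. (mu - nu) * - ln s)"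
      using ln_concave assms(5) by (intro convex_on_cmul) (auto simp: concave_on_def)
    moreover have "convex_on {0<..} (\<lambda>s. C + (lam - kap) * s)"
      by (intro convex_onI) (auto simp: algebra_simps)
    ultimately show ?thesis
      unfolding G_def by (rule convex_on_add)
  qed
  ultimately show ?thesis
    using convex_on_strict_sublevel[of "{0<..}" G 0] by simp
qed

lemma integrable_mult_gamma_density:
  fixes R :: "real \<Rightarrow> real"
  assumes "0 < mu" "0 < lam" "R \<in> borel_measurable borel" "\<And>s. 0 \<le> s \<Longrightarrow> \<bar>R s\<bar> \<le> C * s"
  shows "integrable lborel (\<lambda>s. R s * gamma_density mu lam s)"
  by (rule integrable_mult_if_linear_bound[OF gamma_density_mean(1)[OF assms(1,2)]])
     (use assms in \<open>auto simp: gamma_density_nonneg\<close>)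

lemma integral_mult_gamma_density_pos:
  fixes F :: "real \<Rightarrow> real"
  assumes mu: "0 < mu" and lam: "0 < lam" and int: "integrable lborel (\<lambda>s. F s * gamma_density mu lam s)"
    and F: "\<And>s. 0 \<le> s \<Longrightarrow> 0 \<le> F s" "\<And>s. 0 < s \<Longrightarrow> 0 < F s"
  shows "0 < (\<integral>s. F s * gamma_density mu lam s \<partial>lborel)"
proof (rule integral_pos_if_pos_on_interval[OF int _ zero_less_one])
  show "0 \<le> F s * gamma_density mu lam s" for s
    using F(1)[of s] gamma_density_nonneg[OF mu lam, of s] by (cases "0 \<le> s") auto
  show "0 < F s * gamma_density mu lam s" if "0 < s" for s
    using F(2)[OF that] gamma_density_pos[OF mu lam that] by simp
qed

lemma gamma_density_integral_comp_mult:
  fixes F :: "real \<Rightarrow> real"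
  assumes "0 < r" "0 < mu" "0 < lam"
  shows "integrable lborel (\<lambda>s. F (r * s) * gamma_density mu lam s)
      \<longleftrightarrow> integrable lborel (\<lambda>u. F u * gamma_density mu (lam / r) u)"
    and "(\<integral>s. F (r * s) * gamma_density mu lam s \<partial>lborel)
      = (\<integral>u. F u * gamma_density mu (lam / r) u \<partial>lborel)"
proof -
  have "gamma_density mu lam (u / r) / r = gamma_density mu (lam / r) u" for u
    using gamma_density_rescale assms by simp
  then show "integrable lborel (\<lambda>s. F (r * s) * gamma_density mu lam s)
      \<longleftrightarrow> integrable lborel (\<lambda>u. F u * gamma_density mu (lam / r) u)"
    and "(\<integral>s. F (r * s) * gamma_density mu lam s \<partial>lborel)
      = (\<integral>u. F u * gamma_density mu (lam / r) u \<partial>lborel)"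
    using lborel_integral_comp_mult[OF assms(1), of F "gamma_density mu lam"] by simp_all
qed

lemma gamma_convex_order_integral_le:
  fixes \<phi> :: "real \<Rightarrow> real"
  assumes mu: "0 < mu" and nu: "0 < nu" and lam: "0 < lam" and kap: "0 < kap" and "nu \<le> mu"
    and mean: "mu / lam = nu / kap"
    and \<phi>: "convex_on {0..} \<phi>" "\<phi> \<in> borel_measurable borel" "\<And>x. 0 \<le> x \<Longrightarrow> \<bar>\<phi> x\<bar> \<le> x"
  shows "(\<integral>s. \<phi> s * gamma_density mu lam s \<partial>lborel) \<le> (\<integral>s. \<phi> s * gamma_density nu kap s \<partial>lborel)"
proof (rule density_crossing_convex_integral_le[where a = "\<lambda>s. s", OF \<phi>(1)])
  show "convex {s. 0 < s \<and> gamma_density nu kap s < gamma_density mu lam s}"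
    using convex_gamma_density_less assms by blast
  show "integrable lborel (\<lambda>s. \<phi> s * gamma_density mu lam s)"
    "integrable lborel (\<lambda>s. \<phi> s * gamma_density nu kap s)"
    using integrable_mult_gamma_density[of _ _ \<phi> 1] assms by auto
qed (use gamma_density_integral gamma_density_mean assms in \<open>auto simp: strict_mono_on_def\<close>)

lemma scaled_crossing_convex_integral_le:
  fixes a b \<phi> :: "real \<Rightarrow> real"
  assumes mu: "0 < mu" and nu: "0 < nu" and lam: "0 < lam" and kap: "0 < kap" and nu_le: "nu \<le> mu"
    and r: "0 < r"
    and ab_meas [measurable]: "a \<in> borel_measurable borel" "b \<in> borel_measurable borel"
    and a: "strict_mono_on {0..} a" "\<And>s. 0 \<le> s \<Longrightarrow> \<bar>a s\<bar> \<le> s"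
    and b: "\<And>s. 0 \<le> s \<Longrightarrow> \<bar>b s\<bar> \<le> s"
    and mean_a: "(\<integral>s. a (r * s) * gamma_density nu kap s \<partial>lborel)
      = (\<integral>s. a s * gamma_density mu lam s \<partial>lborel)"
    and mean_b: "(\<integral>s. b s * gamma_density nu kap s \<partial>lborel)
      = (\<integral>s. a s * gamma_density mu lam s \<partial>lborel)"
    and crossing: "\<And>y z. 0 < y \<Longrightarrow> y \<le> z \<Longrightarrow> a (r * y) < b y \<Longrightarrow> a (r * z) < b z"
    and cv: "convex_on UNIV \<phi>"
    and \<phi>a: "integrable lborel (\<lambda>s. \<phi> (a s) * gamma_density mu lam s)"
    and \<phi>b: "integrable lborel (\<lambda>s. \<phi> (b s) * gamma_density nu kap s)"
  shows "(\<integral>s. \<phi> (a s) * gamma_density mu lam s \<partial>lborel)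
    \<le> (\<integral>s. \<phi> (b s) * gamma_density nu kap s \<partial>lborel)"
proof -
  have kap_r: "0 < kap / r"
    using kap r by simp
  note scale = gamma_density_integral_comp_mult[OF r nu kap]
  have a_int: "integrable lborel (\<lambda>s. a s * gamma_density mu' lam' s)"
    if "0 < mu'" "0 < lam'" for mu' lam'
    using a(2) that by (intro integrable_mult_gamma_density[of _ _ _ 1]) auto
  have ar: "(\<lambda>s. a (r * s)) \<in> borel_measurable borel" "mono_on {0..} (\<lambda>s. a (r * s))"
    "integrable lborel (\<lambda>s. a (r * s) * gamma_density nu kap s)"
    using a(1) r scale(1)[of a] a_int[OF nu kap_r]
    by (auto intro!: mono_onI strict_mono_on_leD[OF a(1)] mult_left_mono)
  have "integrable lborel (\<lambda>s. b s * gamma_density nu kap s)"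
    using b nu kap by (intro integrable_mult_gamma_density[of _ _ _ 1]) auto
  \<comment> \<open>Compare a(r T) with b(T) for T ~ Gamma(nu, kap) ...\<close>
  note single_crossing = single_crossing_convex_integral_le[where a = "\<lambda>s. a (r * s)" and b = b,
      OF cv gamma_density_nonneg[OF nu kap] gamma_density_nonpos gamma_density_integral(1)[OF nu kap]
      ar(1) ab_meas(2) ar(3) this trans[OF mean_a mean_b[symmetric]] ar(2) _ \<phi>b]
  have cut: "integrable lborel (\<lambda>s. \<phi> (a (r * s)) * gamma_density nu kap s)"
    "(\<integral>s. \<phi> (a (r * s)) * gamma_density nu kap s \<partial>lborel)
      \<le> (\<integral>s. \<phi> (b s) * gamma_density nu kap s \<partial>lborel)"
    using single_crossing crossing by blast+
  \<comment> \<open>... and a(S) with a(r T), where r T ~ Gamma(nu, kap / r) and S ~ Gamma(mu, lam).\<close>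
  have "(\<integral>s. \<phi> (a s) * gamma_density mu lam s \<partial>lborel)
      \<le> (\<integral>s. \<phi> (a s) * gamma_density nu (kap / r) s \<partial>lborel)"
  proof (rule density_crossing_convex_integral_le[OF cv _ a(1)])
    show "integrable lborel (\<lambda>s. \<phi> (a s) * gamma_density nu (kap / r) s)"
      using cut(1) scale(1)[of "\<lambda>s. \<phi> (a s)"] by simp
    show "(\<integral>s. a s * gamma_density mu lam s \<partial>lborel) = (\<integral>s. a s * gamma_density nu (kap / r) s \<partial>lborel)"
      using mean_a scale(2)[of a] by simp
    show "convex {s. 0 < s \<and> gamma_density nu (kap / r) s < gamma_density mu lam s}"
      using convex_gamma_density_less[OF mu nu lam kap_r] nu_le by simp
  qed (use gamma_density_integral[OF mu lam] gamma_density_integral[OF nu kap_r] a_int[OF mu lam]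
      a_int[OF nu kap_r] \<phi>a in auto)
  then show ?thesis
    using cut(2) scale(2)[of "\<lambda>s. \<phi> (a s)"] by simp
qed

lemma gamma_distributed_measurable:
  "gamma_distributed M X mu lam \<Longrightarrow> X \<in> borel_measurable M"
  using distributed_measurable[of M lborel X] unfolding gamma_distributed_def by simp

lemma gamma_distributed_AE_pos:
  assumes "gamma_distributed M X mu lam"
  shows "AE \<omega> in M. 0 < X \<omega>"
proof -
  have D: "distributed M lborel X (\<lambda>s. ennreal (gamma_density mu lam s))"
    using assms unfolding gamma_distributed_def .
  have "AE s in density lborel (\<lambda>s. ennreal (gamma_density mu lam s)). 0 < s"
  proof (subst AE_density)
    show "AE s in lborel. 0 < ennreal (gamma_density mu lam s) \<longrightarrow> 0 < s"
    proof (intro AE_I2 impI)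
      fix s :: real
      assume "0 < ennreal (gamma_density mu lam s)"
      then show "0 < s"
        using gamma_density_nonpos[of s mu lam] by (cases "0 < s") auto
    qed
  qed measurable
  then have "AE s in distr M lborel X. 0 < s"
    unfolding distributed_distr_eq_density[OF D] .
  then show ?thesis
    using AE_distr_iff[OF distributed_measurable[OF D], of "\<lambda>s. 0 < s"] by simp
qed

lemma gamma_distributed_integral:
  fixes F :: "real \<Rightarrow> real"
  assumes "gamma_distributed M X mu lam" "0 < mu" "0 < lam" "F \<in> borel_measurable borel"
  shows "integrable M (\<lambda>\<omega>. F (X \<omega>)) \<longleftrightarrow> integrable lborel (\<lambda>s. F s * gamma_density mu lam s)"
    and "(\<integral>\<omega>. F (X \<omega>) \<partial>M) = (\<integral>s. F s * gamma_density mu lam s \<partial>lborel)"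
proof -
  have D: "distributed M lborel X (\<lambda>s. ennreal (gamma_density mu lam s))"
    using assms(1) unfolding gamma_distributed_def .
  have F: "F \<in> borel_measurable lborel"
    using assms(4) by simp
  have nonneg: "\<And>s. 0 \<le> gamma_density mu lam s"
    using assms(2,3) by (rule gamma_density_nonneg)
  have comm: "(\<lambda>s. F s * gamma_density mu lam s) = (\<lambda>s. gamma_density mu lam s * F s)"
    by (simp add: fun_eq_iff)
  show "integrable M (\<lambda>\<omega>. F (X \<omega>)) \<longleftrightarrow> integrable lborel (\<lambda>s. F s * gamma_density mu lam s)"
    unfolding comm using distributed_integrable[OF D F] nonneg by auto
  show "(\<integral>\<omega>. F (X \<omega>) \<partial>M) = (\<integral>s. F s * gamma_density mu lam s \<partial>lborel)"
    unfolding comm using distributed_integral[OF D F] nonneg by auto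
qed

lemma gamma_distributed_expectation:
  assumes "gamma_distributed M X mu lam" "0 < mu" "0 < lam"
  shows "(\<integral>\<omega>. X \<omega> \<partial>M) = mu / lam"
proof -
  have "(\<integral>\<omega>. X \<omega> \<partial>M) = (\<integral>s. s * gamma_density mu lam s \<partial>lborel)"
    using gamma_distributed_integral(2)[OF assms, of "\<lambda>s. s"] by simp
  then show ?thesis
    using gamma_density_mean(2)[OF assms(2,3)] by simp
qed

lemma gamma_distributed_integral_cong_pos:
  fixes F H :: "real \<Rightarrow> real"
  assumes X: "gamma_distributed M X mu lam" "0 < mu" "0 < lam"
    and eq: "\<And>s. 0 < s \<Longrightarrow> H s = F s" and [measurable]: "F \<in> borel_measurable borel"
    and HX: "(\<lambda>\<omega>. H (X \<omega>)) \<in> borel_measurable M"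
  shows "integrable M (\<lambda>\<omega>. H (X \<omega>)) \<longleftrightarrow> integrable lborel (\<lambda>s. F s * gamma_density mu lam s)"
    and "(\<integral>\<omega>. H (X \<omega>) \<partial>M) = (\<integral>s. F s * gamma_density mu lam s \<partial>lborel)"
proof -
  have [measurable]: "X \<in> borel_measurable M"
    using gamma_distributed_measurable[OF X(1)] .
  have ae: "AE \<omega> in M. H (X \<omega>) = F (X \<omega>)"
    using gamma_distributed_AE_pos[OF X(1)] by eventually_elim (simp add: eq)
  show "integrable M (\<lambda>\<omega>. H (X \<omega>)) \<longleftrightarrow> integrable lborel (\<lambda>s. F s * gamma_density mu lam s)"
    using integrable_cong_AE[OF HX _ ae] gamma_distributed_integral(1)[OF X] by simp
  show "(\<integral>\<omega>. H (X \<omega>) \<partial>M) = (\<integral>s. F s * gamma_density mu lam s \<partial>lborel)"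
    using integral_cong_AE[OF HX _ ae] gamma_distributed_integral(2)[OF X] by simp
qed

lemma cx_le_gamma_if_convex_integral_le:
  fixes h g F G :: "real \<Rightarrow> real"
  assumes S: "gamma_distributed M S mu lam" "0 < mu" "0 < lam"
    and T: "gamma_distributed N T nu kap" "0 < nu" "0 < kap"
    and h: "\<And>s. 0 < s \<Longrightarrow> h s = F s" and g: "\<And>s. 0 < s \<Longrightarrow> g s = G s"
    and [measurable]: "F \<in> borel_measurable borel" "G \<in> borel_measurable borel"
    and le: "\<And>\<phi>. convex_on UNIV \<phi> \<Longrightarrow>
      integrable lborel (\<lambda>s. \<phi> (F s) * gamma_density mu lam s) \<Longrightarrow>
      integrable lborel (\<lambda>s. \<phi> (G s) * gamma_density nu kap s) \<Longrightarrow>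
      (\<integral>s. \<phi> (F s) * gamma_density mu lam s \<partial>lborel) \<le> (\<integral>s. \<phi> (G s) * gamma_density nu kap s \<partial>lborel)"
  shows "cx_le M (\<lambda>\<omega>. h (S \<omega>)) N (\<lambda>\<omega>. g (T \<omega>))"
  unfolding cx_le_def
proof (intro allI impI)
  fix \<phi> :: "real \<Rightarrow> real"
  assume cv: "convex_on UNIV \<phi>" and intM: "integrable M (\<lambda>\<omega>. \<phi> (h (S \<omega>)))"
    and intN: "integrable N (\<lambda>\<omega>. \<phi> (g (T \<omega>)))"
  have [measurable]: "\<phi> \<in> borel_measurable borel"
    using convex_on_continuous[OF open_UNIV cv] by (rule borel_measurable_continuous_onI)
  note M = gamma_distributed_integral_cong_pos[OF S, of "\<lambda>s. \<phi> (h s)" "\<lambda>s. \<phi> (F s)"]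
  note N = gamma_distributed_integral_cong_pos[OF T, of "\<lambda>s. \<phi> (g s)" "\<lambda>s. \<phi> (G s)"]
  show "(\<integral>\<omega>. \<phi> (h (S \<omega>)) \<partial>M) \<le> (\<integral>\<omega>. \<phi> (g (T \<omega>)) \<partial>N)"
    using M N intM intN le[OF cv] h g by (simp add: borel_measurable_integrable)
qed

section \<open>The Pareto optimal shares for power disutilities\<close>

definition afpo_share2 :: "real \<Rightarrow> real \<Rightarrow> real" where
  "afpo_share2 c s = (sqrt (1 + 4 * c * s) - 1) / (2 * c)"

definition afpo_share1 :: "real \<Rightarrow> real \<Rightarrow> real" where
  "afpo_share1 c s = s - afpo_share2 c s"

lemma borel_measurable_afpo_share [measurable]:
  "afpo_share2 c \<in> borel_measurable borel" "afpo_share1 c \<in> borel_measurable borel"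
  unfolding afpo_share2_def[abs_def] afpo_share1_def[abs_def] by measurable

lemma afpo_share2_quadratic:
  assumes "0 < c" "0 \<le> s"
  shows "c * (afpo_share2 c s)\<^sup>2 + afpo_share2 c s = s"
proof -
  have "(sqrt (1 + 4 * c * s))\<^sup>2 = 1 + 4 * c * s"
    using assms by simp
  then show ?thesis
    using assms unfolding afpo_share2_def by (simp add: field_simps power2_eq_square)
qed

lemma afpo_share2_unique:
  assumes "0 < c" "0 \<le> q" "c * q\<^sup>2 + q = s"
  shows "afpo_share2 c s = q"
proof -
  have "1 + 4 * c * s = (2 * c * q + 1)\<^sup>2"
    unfolding assms(3)[symmetric] by (simp add: power2_eq_square algebra_simps)
  then have "sqrt (1 + 4 * c * s) = 2 * c * q + 1"
    using assms by simp
  then show ?thesis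
    using assms unfolding afpo_share2_def by simp
qed

lemma afpo_share2_nonneg: "0 < c \<Longrightarrow> 0 \<le> s \<Longrightarrow> 0 \<le> afpo_share2 c s"
  unfolding afpo_share2_def by (auto intro!: divide_nonneg_pos)

lemma afpo_share2_pos: "0 < c \<Longrightarrow> 0 < s \<Longrightarrow> 0 < afpo_share2 c s"
  unfolding afpo_share2_def by (auto intro!: divide_pos_pos)

lemma afpo_share2_strict_mono: "0 < c \<Longrightarrow> strict_mono_on {0..} (afpo_share2 c)"
  unfolding afpo_share2_def by (auto intro!: strict_mono_onI divide_strict_right_mono)

lemma afpo_share2_le: "0 < c \<Longrightarrow> 0 \<le> s \<Longrightarrow> afpo_share2 c s \<le> s"
  using afpo_share2_quadratic[of c s] afpo_share2_nonneg[of c s]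
  by (smt (verit) mult_nonneg_nonneg zero_le_power2)

lemma afpo_share2_lipschitz:
  assumes "0 < c" "0 \<le> x" "x \<le> y"
  shows "\<bar>afpo_share2 c y - afpo_share2 c x\<bar> \<le> y - x"
proof -
  have mono: "afpo_share2 c x \<le> afpo_share2 c y"
    using strict_mono_on_leD[OF afpo_share2_strict_mono] assms by auto
  then have "c * (afpo_share2 c x)\<^sup>2 \<le> c * (afpo_share2 c y)\<^sup>2"
    using assms afpo_share2_nonneg[of c x] by (intro mult_left_mono power_mono) auto
  then show ?thesis
    using afpo_share2_quadratic[of c x] afpo_share2_quadratic[of c y] assms mono by linarith
qed

lemma afpo_share2_scale:
  "0 < c \<Longrightarrow> 0 < r \<Longrightarrow> afpo_share2 c (r * s) = r * afpo_share2 (c * r) s"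
  unfolding afpo_share2_def by (simp add: field_simps)

lemma afpo_share1_eq: "0 < c \<Longrightarrow> 0 \<le> s \<Longrightarrow> afpo_share1 c s = c * (afpo_share2 c s)\<^sup>2"
  using afpo_share2_quadratic[of c s] unfolding afpo_share1_def by linarith

lemma afpo_share1_nonneg: "0 < c \<Longrightarrow> 0 \<le> s \<Longrightarrow> 0 \<le> afpo_share1 c s"
  by (simp add: afpo_share1_eq)

lemma afpo_share1_pos: "0 < c \<Longrightarrow> 0 < s \<Longrightarrow> 0 < afpo_share1 c s"
  using afpo_share2_pos[of c s] by (simp add: afpo_share1_eq)

lemma afpo_share1_le: "0 < c \<Longrightarrow> 0 \<le> s \<Longrightarrow> afpo_share1 c s \<le> s"
  using afpo_share2_nonneg[of c s] unfolding afpo_share1_def by simp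

lemma afpo_share1_strict_mono:
  assumes "0 < c"
  shows "strict_mono_on {0..} (afpo_share1 c)"
proof (rule strict_mono_onI)
  fix x y :: real
  assume "x \<in> {0..}" "y \<in> {0..}" "x < y"
  then have "afpo_share2 c x < afpo_share2 c y" "0 \<le> afpo_share2 c x"
    using strict_mono_onD[OF afpo_share2_strict_mono[OF assms]] afpo_share2_nonneg[OF assms] by auto
  then show "afpo_share1 c x < afpo_share1 c y"
    using assms \<open>x \<in> {0..}\<close> \<open>y \<in> {0..}\<close> by (simp add: afpo_share1_eq power_strict_mono)
qed

lemma afpo_share1_lipschitz:
  assumes "0 < c" "0 \<le> x" "x \<le> y"
  shows "\<bar>afpo_share1 c y - afpo_share1 c x\<bar> \<le> y - x"
  using afpo_share2_lipschitz[OF assms] strict_mono_on_leD[OF afpo_share2_strict_mono[OF assms(1)], of x y] assms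
  unfolding afpo_share1_def by (simp add: abs_le_iff)

lemma afpo_share1_scale:
  "0 < c \<Longrightarrow> 0 < r \<Longrightarrow> afpo_share1 c (r * s) = r * afpo_share1 (c * r) s"
  using afpo_share2_scale[of c r s] unfolding afpo_share1_def by (simp add: algebra_simps)

lemma convex_on_neg_afpo_share2:
  assumes "0 < c"
  shows "convex_on {0..} (\<lambda>s. - afpo_share2 c s)"
proof (rule convex_on_realI[where f' = "\<lambda>s. - 1 / sqrt (1 + 4 * c * s)"])
  fix x :: real
  assume "x \<in> {0..}"
  then have "0 < 1 + 4 * c * x"
    using assms by (simp add: add_pos_nonneg)
  then show "((\<lambda>s. - afpo_share2 c s) has_real_derivative - 1 / sqrt (1 + 4 * c * x)) (at x)"
    unfolding afpo_share2_def using assms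
    by (auto intro!: derivative_eq_intros simp: field_simps)
next
  fix x y :: real
  assume "x \<in> {0..}" "y \<in> {0..}" "x \<le> y"
  then show "- 1 / sqrt (1 + 4 * c * x) \<le> - 1 / sqrt (1 + 4 * c * y)"
    using assms by (auto intro!: divide_left_mono mult_pos_pos add_pos_nonneg mult_left_mono)
qed auto

lemma convex_on_afpo_share1:
  assumes "0 < c"
  shows "convex_on {0..} (afpo_share1 c)"
proof -
  have "convex_on {0..} (\<lambda>s. s + - afpo_share2 c s)"
    using assms by (intro convex_on_add convex_on_neg_afpo_share2) (auto simp: convex_on_ident)
  then show ?thesis
    by (simp add: afpo_share1_def[abs_def])
qed

lemma afpo_share2_less_iff:
  assumes "0 < c" "0 \<le> v" "0 \<le> s"
  shows "v < afpo_share2 c s \<longleftrightarrow> v + c * v\<^sup>2 < s"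
proof -
  have "afpo_share2 c (v + c * v\<^sup>2) = v"
    using assms by (intro afpo_share2_unique) auto
  moreover have "0 \<le> v + c * v\<^sup>2"
    using assms by simp
  ultimately show ?thesis
    using strict_mono_on_less[OF afpo_share2_strict_mono[OF assms(1)], of "v + c * v\<^sup>2" s] assms
    by simp
qed

lemma afpo_share1_less_iff:
  assumes "0 < c" "0 \<le> v" "0 \<le> s"
  shows "v < afpo_share1 c s \<longleftrightarrow> v + sqrt (v / c) < s"
proof -
  have "afpo_share2 c (v + sqrt (v / c)) = sqrt (v / c)"
    using assms by (intro afpo_share2_unique) auto
  then have "afpo_share1 c (v + sqrt (v / c)) = v"
    by (simp add: afpo_share1_def)
  moreover have "0 \<le> v + sqrt (v / c)"
    using assms by simp
  ultimately show ?thesis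
    using strict_mono_on_less[OF afpo_share1_strict_mono[OF assms(1)], of "v + sqrt (v / c)" s] assms
    by simp
qed

lemma afpo_share2_scaled_crossing:
  assumes c: "0 < c" and d: "0 < d" and r: "1 \<le> r" and yz: "0 < y" "y \<le> z"
    and less: "afpo_share2 c (r * y) < afpo_share2 d y"
  shows "afpo_share2 c (r * z) < afpo_share2 d z"
proof -
  define e where "e = c * r"
  have e: "0 < e"
    using c r by (simp add: e_def)
  \<comment> \<open>Parametrise t by u = afpo_share2 e t, so that t = u + e u^2 and afpo_share2 c (r t) = r u.\<close>
  have key: "afpo_share2 c (r * t) < afpo_share2 d t \<longleftrightarrow> r - 1 < (e - d * r\<^sup>2) * afpo_share2 e t"
    if "0 < t" for t
  proof -
    define u where "u = afpo_share2 e t"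
    have u: "0 < u" "t = u + e * u\<^sup>2"
      using afpo_share2_pos[OF e that] afpo_share2_quadratic[OF e, of t] that by (auto simp: u_def)
    have "afpo_share2 c (r * t) = r * u"
      using afpo_share2_scale[OF c, of r t] r by (simp add: u_def e_def)
    then have "afpo_share2 c (r * t) < afpo_share2 d t \<longleftrightarrow> r * u + d * (r * u)\<^sup>2 < u + e * u\<^sup>2"
      using afpo_share2_less_iff[OF d, of "r * u" t] u r that by simp
    also have "\<dots> \<longleftrightarrow> 0 < u * ((1 - r) + (e - d * r\<^sup>2) * u)"
      by (simp add: algebra_simps power2_eq_square)
    also have "\<dots> \<longleftrightarrow> 0 < (1 - r) + (e - d * r\<^sup>2) * u"
      using u by (simp add: zero_less_mult_iff)
    also have "\<dots> \<longleftrightarrow> r - 1 < (e - d * r\<^sup>2) * u"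
      by linarith
    finally show ?thesis by (simp add: u_def)
  qed
  have y: "r - 1 < (e - d * r\<^sup>2) * afpo_share2 e y"
    using key[OF yz(1)] less by simp
  then have "0 < (e - d * r\<^sup>2) * afpo_share2 e y"
    using r by linarith
  then have "0 < e - d * r\<^sup>2"
    using afpo_share2_pos[OF e yz(1)] by (simp add: zero_less_mult_iff)
  moreover have "afpo_share2 e y \<le> afpo_share2 e z"
    using strict_mono_on_leD[OF afpo_share2_strict_mono[OF e]] yz by simp
  ultimately have "r - 1 < (e - d * r\<^sup>2) * afpo_share2 e z"
    using y by (smt (verit) mult_left_mono)
  then show ?thesis
    using key yz by simp
qed

lemma afpo_share1_scaled_crossing:
  assumes c: "0 < c" and d: "0 < d" and r: "0 < r" "r \<le> 1" and yz: "0 < y" "y \<le> z"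
    and less: "afpo_share1 c (r * y) < afpo_share1 d y"
  shows "afpo_share1 c (r * z) < afpo_share1 d z"
proof -
  define e where "e = c * r"
  have e: "0 < e"
    using c r by (simp add: e_def)
  \<comment> \<open>Parametrise t by u = afpo_share2 e t, so that t = u + e u^2 and afpo_share1 c (r t) = r e u^2.\<close>
  have key: "afpo_share1 c (r * t) < afpo_share1 d t \<longleftrightarrow> sqrt (r * e / d) - 1 < e * (1 - r) * afpo_share2 e t"
    if "0 < t" for t
  proof -
    define u where "u = afpo_share2 e t"
    have u: "0 < u" "t = u + e * u\<^sup>2"
      using afpo_share2_pos[OF e that] afpo_share2_quadratic[OF e, of t] that by (auto simp: u_def)
    have "afpo_share1 c (r * t) = r * e * u\<^sup>2"
      using afpo_share1_scale[OF c r(1), of t] afpo_share1_eq[OF e, of t] that by (simp add: u_def e_def)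
    moreover have "sqrt (r * e * u\<^sup>2 / d) = u * sqrt (r * e / d)"
      using u by (simp add: real_sqrt_mult real_sqrt_divide)
    ultimately have "afpo_share1 c (r * t) < afpo_share1 d t
        \<longleftrightarrow> r * e * u\<^sup>2 + u * sqrt (r * e / d) < u + e * u\<^sup>2"
      using afpo_share1_less_iff[OF d, of "r * e * u\<^sup>2" t] u r e that by simp
    also have "\<dots> \<longleftrightarrow> 0 < u * (1 + e * (1 - r) * u - sqrt (r * e / d))"
      by (simp add: algebra_simps power2_eq_square)
    also have "\<dots> \<longleftrightarrow> 0 < 1 + e * (1 - r) * u - sqrt (r * e / d)"
      using u by (simp add: zero_less_mult_iff)
    also have "\<dots> \<longleftrightarrow> sqrt (r * e / d) - 1 < e * (1 - r) * u"
      by linarith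
    finally show ?thesis by (simp add: u_def)
  qed
  have "e * (1 - r) * afpo_share2 e y \<le> e * (1 - r) * afpo_share2 e z"
    using strict_mono_on_leD[OF afpo_share2_strict_mono[OF e]] yz e r by (simp add: mult_left_mono)
  then show ?thesis
    using key[OF yz(1)] key[of z] less yz by simp
qed

lemma afpo_share2_sqrt_scale:
  assumes c: "0 < c" and R: "1 \<le> R" and s: "0 \<le> s"
  shows "sqrt R * afpo_share2 c s \<le> afpo_share2 c (R * s)"
proof -
  define q where "q = afpo_share2 c s"
  have q: "0 \<le> q" "c * q\<^sup>2 + q = s"
    using afpo_share2_nonneg[OF c s] afpo_share2_quadratic[OF c s] by (simp_all add: q_def)
  have "sqrt R \<le> R"
    using R real_sqrt_le_iff[of R "R\<^sup>2"] by (simp add: power2_eq_square)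
  then have "sqrt R * q \<le> R * q"
    using q(1) by (rule mult_right_mono)
  then have "sqrt R * q + c * (sqrt R * q)\<^sup>2 \<le> R * s"
    using q R by (simp add: power_mult_distrib algebra_simps mult_right_mono flip: q(2))
  moreover have "afpo_share2 c (sqrt R * q + c * (sqrt R * q)\<^sup>2) = sqrt R * q"
    using c q R by (intro afpo_share2_unique) auto
  moreover have "0 \<le> sqrt R * q + c * (sqrt R * q)\<^sup>2"
    using c q R by simp
  ultimately show ?thesis
    using strict_mono_on_leD[OF afpo_share2_strict_mono[OF c], of "sqrt R * q + c * (sqrt R * q)\<^sup>2" "R * s"]
    by (simp add: q_def)
qed

lemma AFPO_power_marginal_shares:
  assumes afpo: "AFPO M X1 X2 (power_marginal \<sigma>) (power_marginal (2 * \<sigma>)) h1 h2"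
    and \<sigma>: "0 < \<sigma>"
  obtains c where "0 < c" "\<And>s. 0 < s \<Longrightarrow> h1 s = afpo_share1 c s \<and> h2 s = afpo_share2 c s"
proof -
  obtain J \<alpha>1 \<alpha>2 where \<alpha>: "0 < \<alpha>1" "0 < \<alpha>2"
    and J: "\<forall>s\<ge>0. 0 \<le> J s \<and> \<alpha>1 * power_marginal \<sigma> (h1 s) = J s
      \<and> \<alpha>2 * power_marginal (2 * \<sigma>) (h2 s) = J s"
    and h: "\<forall>s\<ge>0. 0 \<le> h1 s \<and> 0 \<le> h2 s \<and> h1 s + h2 s = s"
    using afpo unfolding AFPO_def by blast
  define c where "c = (\<alpha>2 / \<alpha>1) powr (1 / \<sigma>)"
  have c: "0 < c"
    using \<alpha> by (simp add: c_def)
  have "h1 s = afpo_share1 c s \<and> h2 s = afpo_share2 c s" if s: "0 < s" for s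
  proof -
    define p q where "p = h1 s" and "q = h2 s"
    have pq: "0 \<le> p" "0 \<le> q" "p + q = s"
      using h s by (simp_all add: p_def q_def)
    have "\<alpha>1 * p powr \<sigma> = \<alpha>2 * q powr (2 * \<sigma>)"
      using J s by (simp add: p_def q_def power_marginal_def)
    then have eq: "p powr \<sigma> = \<alpha>2 / \<alpha>1 * q powr (2 * \<sigma>)"
      using \<alpha> by (simp add: field_simps)
    have "p = (p powr \<sigma>) powr (1 / \<sigma>)"
      using \<sigma> pq(1) by (simp add: powr_powr)
    also have "\<dots> = (\<alpha>2 / \<alpha>1 * q powr (2 * \<sigma>)) powr (1 / \<sigma>)"
      by (simp only: eq)
    also have "\<dots> = c * (q powr (2 * \<sigma>)) powr (1 / \<sigma>)"
      unfolding c_def by (rule powr_mult)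
    also have "(q powr (2 * \<sigma>)) powr (1 / \<sigma>) = q\<^sup>2"
      using \<sigma> pq(2) by (simp add: powr_powr powr_numeral)
    finally have "c * q\<^sup>2 + q = s"
      using pq by simp
    then have "afpo_share2 c s = q"
      using c pq by (intro afpo_share2_unique) auto
    then show ?thesis
      using pq by (simp add: afpo_share1_def p_def q_def)
  qed
  then show ?thesis
    using c that by blast
qed

section \<open>Convex order of the shares\<close>

lemma afpo_share2_scale_exists:
  assumes mu: "0 < mu" and nu: "0 < nu" and lam: "0 < lam" and kap: "0 < kap" and "nu \<le> mu"
    and "mu / lam = nu / kap" and c: "0 < c"
  obtains r where "1 \<le> r"
    "(\<integral>s. afpo_share2 c (r * s) * gamma_density nu kap s \<partial>lborel)
      = (\<integral>s. afpo_share2 c s * gamma_density mu lam s \<partial>lborel)"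
proof -
  define \<Phi> where "\<Phi> r = (\<integral>s. afpo_share2 c (r * s) * gamma_density nu kap s \<partial>lborel)" for r
  have bound: "\<bar>afpo_share2 c x\<bar> \<le> x" if "0 \<le> x" for x
    using afpo_share2_nonneg[OF c that] afpo_share2_le[OF c that] by simp
  have int: "integrable lborel (\<lambda>s. afpo_share2 c (r * s) * gamma_density nu kap s)" if "0 \<le> r" for r
    using bound that nu kap by (intro integrable_mult_gamma_density[of _ _ _ r]) (auto simp: abs_mult)
  have cont: "continuous_on {0..} \<Phi>"
    unfolding \<Phi>_def using gamma_density_mean(1)[OF nu kap] afpo_share2_lipschitz[OF c] bound
    by (intro continuous_on_integral_comp_mult) (auto simp: gamma_density_nonneg nu kap)
  \<comment> \<open>The concave share has the smaller mean under the more dispersed aggregate loss, ...\<close>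
  have le: "\<Phi> 1 \<le> (\<integral>s. afpo_share2 c s * gamma_density mu lam s \<partial>lborel)"
    using gamma_convex_order_integral_le[OF assms(1-6) convex_on_neg_afpo_share2[OF c]] bound
    by (simp add: \<Phi>_def)
  have pos: "0 < \<Phi> 1"
    unfolding \<Phi>_def using int[of 1] by (rule integral_mult_gamma_density_pos[OF nu kap])
      (use afpo_share2_nonneg[OF c] afpo_share2_pos[OF c] in auto)
  \<comment> \<open>... while scaling the loss by R multiplies it at least by sqrt R.\<close>
  have growth: "sqrt R * \<Phi> 1 \<le> \<Phi> R" if "1 \<le> R" for R
  proof -
    have "sqrt R * (afpo_share2 c s * gamma_density nu kap s)
        \<le> afpo_share2 c (R * s) * gamma_density nu kap s" for s
    proof (cases "0 \<le> s")
      case True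
      then show ?thesis
        using afpo_share2_sqrt_scale[OF c that True] gamma_density_nonneg[OF nu kap, of s]
        by (simp add: mult_right_mono flip: mult.assoc)
    qed simp
    then have "(\<integral>s. sqrt R * (afpo_share2 c s * gamma_density nu kap s) \<partial>lborel) \<le> \<Phi> R"
      unfolding \<Phi>_def using int[of 1] int[of R] that by (intro integral_mono) auto
    then show ?thesis by (simp add: \<Phi>_def)
  qed
  obtain r where "1 \<le> r" "\<Phi> r = (\<integral>s. afpo_share2 c s * gamma_density mu lam s \<partial>lborel)"
    using IVT_sqrt_growth[OF continuous_on_subset[OF cont] le pos] growth by auto
  then show ?thesis
    using that by (simp add: \<Phi>_def)
qed

lemma afpo_share1_scale_exists:
  assumes mu: "0 < mu" and nu: "0 < nu" and lam: "0 < lam" and kap: "0 < kap" and "nu \<le> mu"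
    and "mu / lam = nu / kap" and c: "0 < c"
  obtains r where "0 < r" "r \<le> 1"
    "(\<integral>s. afpo_share1 c (r * s) * gamma_density nu kap s \<partial>lborel)
      = (\<integral>s. afpo_share1 c s * gamma_density mu lam s \<partial>lborel)"
proof -
  define \<Phi> where "\<Phi> r = (\<integral>s. afpo_share1 c (r * s) * gamma_density nu kap s \<partial>lborel)" for r
  define m where "m = (\<integral>s. afpo_share1 c s * gamma_density mu lam s \<partial>lborel)"
  have bound: "\<bar>afpo_share1 c x\<bar> \<le> x" if "0 \<le> x" for x
    using afpo_share1_nonneg[OF c that] afpo_share1_le[OF c that] by simp
  have "continuous_on {0..} \<Phi>"
    unfolding \<Phi>_def using gamma_density_mean(1)[OF nu kap] afpo_share1_lipschitz[OF c] bound
    by (intro continuous_on_integral_comp_mult) (auto simp: gamma_density_nonneg nu kap)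
  moreover have "\<Phi> 0 = 0"
    by (simp add: \<Phi>_def afpo_share1_def afpo_share2_def)
  moreover have "m \<le> \<Phi> 1"
    using gamma_convex_order_integral_le[OF assms(1-6) convex_on_afpo_share1[OF c]] bound
    by (simp add: \<Phi>_def m_def)
  moreover have "integrable lborel (\<lambda>s. afpo_share1 c s * gamma_density mu lam s)"
    using bound mu lam by (intro integrable_mult_gamma_density[of _ _ _ 1]) auto
  then have m_pos: "0 < m"
    unfolding m_def by (rule integral_mult_gamma_density_pos[OF mu lam])
      (use afpo_share1_nonneg[OF c] afpo_share1_pos[OF c] in auto)
  ultimately obtain r where "0 \<le> r" "r \<le> 1" "\<Phi> r = m"
    using IVT'[of \<Phi> 0 m 1] continuous_on_subset[of "{0..}" \<Phi> "{0..1}"] by force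
  moreover have "r \<noteq> 0"
    using \<open>\<Phi> 0 = 0\<close> \<open>\<Phi> r = m\<close> m_pos by auto
  ultimately show ?thesis
    using that[of r] by (simp add: \<Phi>_def m_def)
qed

lemma afpo_share2_convex_integral_le:
  fixes \<phi> :: "real \<Rightarrow> real"
  assumes mu: "0 < mu" and nu: "0 < nu" and lam: "0 < lam" and kap: "0 < kap" and "nu \<le> mu"
    and "mu / lam = nu / kap" and c: "0 < c" and d: "0 < d"
    and mean: "(\<integral>s. afpo_share2 d s * gamma_density nu kap s \<partial>lborel)
      = (\<integral>s. afpo_share2 c s * gamma_density mu lam s \<partial>lborel)"
    and "convex_on UNIV \<phi>"
    and "integrable lborel (\<lambda>s. \<phi> (afpo_share2 c s) * gamma_density mu lam s)"
    and "integrable lborel (\<lambda>s. \<phi> (afpo_share2 d s) * gamma_density nu kap s)"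
  shows "(\<integral>s. \<phi> (afpo_share2 c s) * gamma_density mu lam s \<partial>lborel)
    \<le> (\<integral>s. \<phi> (afpo_share2 d s) * gamma_density nu kap s \<partial>lborel)"
proof -
  obtain r where r: "1 \<le> r"
    and mean_r: "(\<integral>s. afpo_share2 c (r * s) * gamma_density nu kap s \<partial>lborel)
      = (\<integral>s. afpo_share2 c s * gamma_density mu lam s \<partial>lborel)"
    using afpo_share2_scale_exists[OF assms(1-7)] .
  have bound: "\<bar>afpo_share2 e s\<bar> \<le> s" if "0 < e" "0 \<le> s" for e s
    using afpo_share2_nonneg[OF that] afpo_share2_le[OF that] by simp
  show ?thesis
    using bound c d r afpo_share2_scaled_crossing[OF c d r]
    by (intro scaled_crossing_convex_integral_le[OF assms(1-5) _ _ _ afpo_share2_strict_mono[OF c]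
          _ _ mean_r mean _ assms(10-12)]) auto
qed

lemma afpo_share1_convex_integral_le:
  fixes \<phi> :: "real \<Rightarrow> real"
  assumes mu: "0 < mu" and nu: "0 < nu" and lam: "0 < lam" and kap: "0 < kap" and "nu \<le> mu"
    and "mu / lam = nu / kap" and c: "0 < c" and d: "0 < d"
    and mean: "(\<integral>s. afpo_share1 d s * gamma_density nu kap s \<partial>lborel)
      = (\<integral>s. afpo_share1 c s * gamma_density mu lam s \<partial>lborel)"
    and "convex_on UNIV \<phi>"
    and "integrable lborel (\<lambda>s. \<phi> (afpo_share1 c s) * gamma_density mu lam s)"
    and "integrable lborel (\<lambda>s. \<phi> (afpo_share1 d s) * gamma_density nu kap s)"
  shows "(\<integral>s. \<phi> (afpo_share1 c s) * gamma_density mu lam s \<partial>lborel)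
    \<le> (\<integral>s. \<phi> (afpo_share1 d s) * gamma_density nu kap s \<partial>lborel)"
proof -
  obtain r where r: "0 < r" "r \<le> 1"
    and mean_r: "(\<integral>s. afpo_share1 c (r * s) * gamma_density nu kap s \<partial>lborel)
      = (\<integral>s. afpo_share1 c s * gamma_density mu lam s \<partial>lborel)"
    using afpo_share1_scale_exists[OF assms(1-7)] .
  have bound: "\<bar>afpo_share1 e s\<bar> \<le> s" if "0 < e" "0 \<le> s" for e s
    using afpo_share1_nonneg[OF that] afpo_share1_le[OF that] by simp
  show ?thesis
    using bound c d r afpo_share1_scaled_crossing[OF c d r]
    by (intro scaled_crossing_convex_integral_le[OF assms(1-5) _ _ _ afpo_share1_strict_mono[OF c]
          _ _ mean_r mean _ assms(10-12)]) auto
qed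

lemma AFPO_power_gamma_shares:
  assumes afpo: "AFPO M X1 X2 (power_marginal \<sigma>) (power_marginal (2 * \<sigma>)) h1 h2" and "0 < \<sigma>"
    and S: "gamma_distributed M (\<lambda>\<omega>. X1 \<omega> + X2 \<omega>) mu lam" "0 < mu" "0 < lam"
    and E: "(\<integral>\<omega>. X1 \<omega> \<partial>M) \<noteq> 0" "(\<integral>\<omega>. X2 \<omega> \<partial>M) \<noteq> 0"
  obtains c where "0 < c"
    "\<And>s. 0 < s \<Longrightarrow> h1 s = afpo_share1 c s" "\<And>s. 0 < s \<Longrightarrow> h2 s = afpo_share2 c s"
    "(\<integral>s. afpo_share1 c s * gamma_density mu lam s \<partial>lborel) = (\<integral>\<omega>. X1 \<omega> \<partial>M)"
    "(\<integral>s. afpo_share2 c s * gamma_density mu lam s \<partial>lborel) = (\<integral>\<omega>. X2 \<omega> \<partial>M)"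
proof -
  obtain c where c: "0 < c" and h: "\<And>s. 0 < s \<Longrightarrow> h1 s = afpo_share1 c s \<and> h2 s = afpo_share2 c s"
    using AFPO_power_marginal_shares[OF assms(1,2)] by blast
  \<comment> \<open>A nonzero integral certifies integrability, hence measurability, of the share of S.\<close>
  have mean: "(\<integral>s. F s * gamma_density mu lam s \<partial>lborel) = (\<integral>\<omega>. X \<omega> \<partial>M)"
    if "\<And>s. 0 < s \<Longrightarrow> h s = F s" "F \<in> borel_measurable borel"
      "(\<integral>\<omega>. h (X1 \<omega> + X2 \<omega>) \<partial>M) = (\<integral>\<omega>. X \<omega> \<partial>M)" "(\<integral>\<omega>. X \<omega> \<partial>M) \<noteq> 0"
    for h F and X :: "'a \<Rightarrow> real"
  proof -
    have "integrable M (\<lambda>\<omega>. h (X1 \<omega> + X2 \<omega>))"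
      using that(3,4) not_integrable_integral_eq by metis
    then show ?thesis
      using gamma_distributed_integral_cong_pos(2)[OF S that(1,2)] that(3)
      by (simp add: borel_measurable_integrable)
  qed
  have fair: "(\<integral>\<omega>. h1 (X1 \<omega> + X2 \<omega>) \<partial>M) = (\<integral>\<omega>. X1 \<omega> \<partial>M)"
    "(\<integral>\<omega>. h2 (X1 \<omega> + X2 \<omega>) \<partial>M) = (\<integral>\<omega>. X2 \<omega> \<partial>M)"
    using afpo unfolding AFPO_def by blast+
  show ?thesis
  proof (rule that[OF c])
    show "(\<integral>s. afpo_share1 c s * gamma_density mu lam s \<partial>lborel) = (\<integral>\<omega>. X1 \<omega> \<partial>M)"
      by (rule mean[OF _ _ fair(1) E(1)]) (use h in auto)
    show "(\<integral>s. afpo_share2 c s * gamma_density mu lam s \<partial>lborel) = (\<integral>\<omega>. X2 \<omega> \<partial>M)"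
      by (rule mean[OF _ _ fair(2) E(2)]) (use h in auto)
  qed (use h in simp_all)
qed

theorem proposition5p4:
  fixes M :: "'a measure" and N :: "'b measure"
    and X1 X2 :: "'a \<Rightarrow> real" and Y1 Y2 :: "'b \<Rightarrow> real"
    and mu1 mu2 lam nu1 nu2 kap \<sigma>1 \<sigma>2 \<tau>1 \<tau>2 :: real
    and h1 h2 g1 g2 :: "real \<Rightarrow> real"
  assumes "prob_space M" and "prob_space N"
    and "mu1 > 0" "mu2 > 0" "lam > 0"
    and "nu1 > 0" "nu2 > 0" "kap > 0"
    and "prob_space.indep_var M borel X1 borel X2"
    and "gamma_distributed M X1 mu1 lam" and "gamma_distributed M X2 mu2 lam"
    and "gamma_distributed M (\<lambda>\<omega>. X1 \<omega> + X2 \<omega>) (mu1 + mu2) lam"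
    and "prob_space.indep_var N borel Y1 borel Y2"
    and "gamma_distributed N Y1 nu1 kap" and "gamma_distributed N Y2 nu2 kap"
    and "gamma_distributed N (\<lambda>\<omega>. Y1 \<omega> + Y2 \<omega>) (nu1 + nu2) kap"
    and "\<sigma>1 > 0" "\<sigma>2 = 2 * \<sigma>1"
    and "\<tau>1 > 0" "\<tau>2 = 2 * \<tau>1"
    and "(\<integral>\<omega>. X1 \<omega> \<partial>M) = (\<integral>\<omega>. Y1 \<omega> \<partial>N)"
    and "(\<integral>\<omega>. X2 \<omega> \<partial>M) = (\<integral>\<omega>. Y2 \<omega> \<partial>N)"
    and "mu1 + mu2 \<ge> nu1 + nu2"
    and "(mu1 + mu2) / lam = (nu1 + nu2) / kap"
    and "AFPO M X1 X2 (power_marginal \<sigma>1) (power_marginal \<sigma>2) h1 h2"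
    and "AFPO N Y1 Y2 (power_marginal \<tau>1) (power_marginal \<tau>2) g1 g2"
  shows "cx_le M (\<lambda>\<omega>. h1 (X1 \<omega> + X2 \<omega>)) N (\<lambda>\<omega>. g1 (Y1 \<omega> + Y2 \<omega>)) \<and>
         cx_le M (\<lambda>\<omega>. h2 (X1 \<omega> + X2 \<omega>)) N (\<lambda>\<omega>. g2 (Y1 \<omega> + Y2 \<omega>))"
proof -
  note S = assms(12) and T = assms(16)
  have pos: "0 < mu1 + mu2" "0 < nu1 + nu2" "0 < lam" "0 < kap"
    using assms(3-8) by simp_all
  have E: "(\<integral>\<omega>. X1 \<omega> \<partial>M) \<noteq> 0" "(\<integral>\<omega>. X2 \<omega> \<partial>M) \<noteq> 0"
    "(\<integral>\<omega>. Y1 \<omega> \<partial>N) \<noteq> 0" "(\<integral>\<omega>. Y2 \<omega> \<partial>N) \<noteq> 0"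
    using gamma_distributed_expectation[OF assms(10) assms(3,5)]
      gamma_distributed_expectation[OF assms(11) assms(4,5)] assms(3-5,21,22) by simp_all
  obtain c where c: "0 < c" "\<And>s. 0 < s \<Longrightarrow> h1 s = afpo_share1 c s" "\<And>s. 0 < s \<Longrightarrow> h2 s = afpo_share2 c s"
    "(\<integral>s. afpo_share1 c s * gamma_density (mu1 + mu2) lam s \<partial>lborel) = (\<integral>\<omega>. X1 \<omega> \<partial>M)"
    "(\<integral>s. afpo_share2 c s * gamma_density (mu1 + mu2) lam s \<partial>lborel) = (\<integral>\<omega>. X2 \<omega> \<partial>M)"
    using AFPO_power_gamma_shares[OF assms(25)[unfolded assms(18)] assms(17) S pos(1,3) E(1,2)] by blast
  obtain d where d: "0 < d" "\<And>s. 0 < s \<Longrightarrow> g1 s = afpo_share1 d s" "\<And>s. 0 < s \<Longrightarrow> g2 s = afpo_share2 d s"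
    "(\<integral>s. afpo_share1 d s * gamma_density (nu1 + nu2) kap s \<partial>lborel) = (\<integral>\<omega>. Y1 \<omega> \<partial>N)"
    "(\<integral>s. afpo_share2 d s * gamma_density (nu1 + nu2) kap s \<partial>lborel) = (\<integral>\<omega>. Y2 \<omega> \<partial>N)"
    using AFPO_power_gamma_shares[OF assms(26)[unfolded assms(20)] assms(19) T pos(2,4) E(3,4)] by blast
  note compare = cx_le_gamma_if_convex_integral_le[OF S pos(1,3) T pos(2,4)]
  note params = pos(1,2) pos(3,4) assms(23,24) c(1) d(1)
  show ?thesis
    using c(4,5) d(4,5) assms(21,22)
    by (auto intro!: compare[OF c(2) d(2)] compare[OF c(3) d(3)]
        afpo_share1_convex_integral_le[OF params] afpo_share2_convex_integral_le[OF params])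
qed

end
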